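(* Let $\sigma,\tau,\bar\sigma,\bar\tau$ satisfy the Standing Hypothesis and let $m,n,x$ be integers with $0\le x<n\le m$. Then $$\{\sigma,m,n,\tau\,|\,\bar\sigma,x,\bar\tau\}-\{\sigma,m+1,n-1,\tau\,|\,\bar\sigma,x,\bar\tau\} =\{\sigma,m,n,\tau\,|\,\bar\sigma,n,\bar\tau\}+\{\sigma,m+1,n-1+\tau_1,\tau\backslash\tau_1\,|\,\bar\sigma,n,\bar\tau\backslash\bar\tau_1\},$$ where the second term on the right is omitted if $t=0$.
   Context: Overlap notation: for $\alpha=(\alpha_1,\dots,\alpha_L)$ with $\alpha_i\ge1$ and $\beta=(\beta_1,\dots,\beta_{L-1})$ with $0\le\beta_i\le\min\{\alpha_i,\alpha_{i+1}\}$, $(\alpha\,|\,\beta)$ is the skew diagram $\lambda/\mu$ (boxes $(i,j)$ with $\mu_i<j\le\lambda_i$, identified up to deleting empty rows/columns) with $L$ nonempty rows, $\lambda_i-\mu_i=\alpha_i$, $\lambda_{i+1}-\mu_i=\beta_i$ (row $i$ has $\alpha_i$ boxes, rows $i,i+1$ share $\beta_i$ columns); $\{\alpha\,|\,\beta\}=s_{\lambda/\mu}$ is its skew Schur function (generating function of semistandard Young tableaux of that shape). Commas denote concatenation of sequences. Standing Hypothesis: $\sigma=(\sigma_1,\dots,\sigma_s)$, $\tau=(\tau_1,\dots,\tau_t)$ compositions, $s,t\ge0$; $\bar\sigma,\bar\tau$ sequences of non-negative integers of lengths $s,t$; $\bar\sigma_s=1$ if $s>0$; $\bar\tau_1=1$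 if $t>0$; $\bar\sigma_i\le\min\{\sigma_i,\sigma_{i+1}\}$ ($1\le i<s$), $\bar\tau_i\le\min\{\tau_i,\tau_{i-1}\}$ ($1<i\le t$). $\sigma\backslash\sigma_s$ removes the last part of $\sigma$, $\tau\backslash\tau_1$ removes the first part of $\tau$, and similarly for $\bar\sigma\backslash\bar\sigma_s$, $\bar\tau\backslash\bar\tau_1$. *)

theory Defs
  imports Main
begin

(* Rows are indexed 0..L-1 (top to bottom, English
   convention); row i occupies the integer columns row_off i < j <= row_off i + alpha_i,
   i.e. row_off i plays the role of mu_i (up to a global translation, which is irrelevant).
   The condition lambda_(i+1) - mu_i = beta_i gives
   mu_(i+1) = mu_i + beta_i - alpha_(i+1). *)

definition overlap_valid :: "nat list \<Rightarrow> nat list \<Rightarrow> bool" where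
  "overlap_valid \<alpha> \<beta> \<longleftrightarrow> length \<beta> + 1 = length \<alpha> \<and>
     (\<forall>i < length \<beta>. \<beta> ! i \<le> min (\<alpha> ! i) (\<alpha> ! Suc i))"

primrec row_off :: "nat list \<Rightarrow> nat list \<Rightarrow> nat \<Rightarrow> int" where
  "row_off \<alpha> \<beta> 0 = 0"
| "row_off \<alpha> \<beta> (Suc i) = row_off \<alpha> \<beta> i + int (\<beta> ! i) - int (\<alpha> ! Suc i)"

definition overlap_diagram :: "nat list \<Rightarrow> nat list \<Rightarrow> (nat \<times> int) set" where
  "overlap_diagram \<alpha> \<beta> =
     {(i, j). i < length \<alpha> \<and> row_off \<alpha> \<beta> i < j \<and> j \<le> row_off \<alpha> \<beta> i + int (\<alpha> ! i)}"

(* semistandard Young tableau of (skew) shape D with entries in {1,2,...};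
   T is 0 outside D so that tableaux are determined by their values on D *)
definition is_ssyt :: "(nat \<times> int) set \<Rightarrow> (nat \<times> int \<Rightarrow> nat) \<Rightarrow> bool" where
  "is_ssyt D T \<longleftrightarrow>
     (\<forall>b\<in>D. 1 \<le> T b) \<and> (\<forall>b. b \<notin> D \<longrightarrow> T b = 0) \<and>
     (\<forall>i j j'. (i, j) \<in> D \<longrightarrow> (i, j') \<in> D \<longrightarrow> j \<le> j' \<longrightarrow> T (i, j) \<le> T (i, j')) \<and>
     (\<forall>i i' j. (i, j) \<in> D \<longrightarrow> (i', j) \<in> D \<longrightarrow> i < i' \<longrightarrow> T (i, j) < T (i', j))"

(* {alpha | beta} as a symmetric function in x_1, x_2, ..., represented by its coefficient
   function: skew_schur alpha beta c is the coefficient of the monomial prod_k x_k^(c k),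
   i.e. the number of SSYT of shape (alpha | beta) with content c.  If the overlap data do
   not describe a skew diagram (beta_i > min(alpha_i, alpha_(i+1))) the value is 0.
   Parts alpha_i = 0 give empty rows, which are deleted. *)
definition skew_schur :: "nat list \<Rightarrow> nat list \<Rightarrow> (nat \<Rightarrow> nat) \<Rightarrow> int" where
  "skew_schur \<alpha> \<beta> c =
     (if overlap_valid \<alpha> \<beta> then
        int (card {T. is_ssyt (overlap_diagram \<alpha> \<beta>) T \<and>
                      (\<forall>k. card {b \<in> overlap_diagram \<alpha> \<beta>. T b = k} = c k)})
      else 0)"

end

theory Submission
  imports Defs "HOL-Library.Multiset"
begin

(* The proof is bijective and compares the coefficients of each monomial, i.e. counts
   semistandard tableaux of a fixed content c.
   (1) Tableaux are encoded as lists of rows; two rows sharing b columns must be compatible.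
   (2) For sorted rows w above z, compatibility along b columns says that the excess
       #{letters of z \<le> h} - #{letters of w < h} never exceeds length z - b.
   (3) Moving the first peak letter of z up into w lowers the maximal excess by one; moving the
       last peak letter of w down into z raises it by one, and the two moves are inverse.
   (4) Cut every tableau at its two middle rows (w, z).  The tableaux of the first term that are
       not tableaux of the third one have positive maximal excess; lifting the peak letter maps
       them bijectively onto the tableaux of the second term, except for the "stuck" ones where z
       then has no letter below the last letter of the first row of tau.  Merging the rest of z
       into that row matches the stuck tableaux bijectively with those of the fourth term. *)

section \<open>Semistandard tableaux as lists of rows\<close>

definition row_word :: "nat \<Rightarrow> nat list \<Rightarrow> bool" where
  "row_word a u \<longleftrightarrow> length u = a \<and> sorted u \<and> (\<forall>v\<in>set u. 1 \<le> v)"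

(* Column strictness between a row u and the row v directly below it when they share b
   columns: the first b letters of u stand strictly above the last b letters of v. *)
definition compatible :: "nat \<Rightarrow> nat list \<Rightarrow> nat list \<Rightarrow> bool" where
  "compatible b u v \<longleftrightarrow> (\<forall>j<b. u!j < v!(length v - b + j))"

definition row_tableau :: "nat list \<Rightarrow> nat list \<Rightarrow> nat list list \<Rightarrow> bool" where
  "row_tableau \<alpha> \<beta> W \<longleftrightarrow> length W = length \<alpha> \<and> (\<forall>i<length \<alpha>. row_word (\<alpha>!i) (W!i))
      \<and> (\<forall>i<length \<beta>. compatible (\<beta>!i) (W!i) (W!Suc i))"

definition word_content :: "nat list list \<Rightarrow> nat \<Rightarrow> nat" where
  "word_content W k = count (mset (concat W)) k"

lemma row_off_step:
  assumes "overlap_valid \<alpha> \<beta>" "Suc i < length \<alpha>"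
  shows "row_off \<alpha> \<beta> (Suc i) \<le> row_off \<alpha> \<beta> i \<and>
         row_off \<alpha> \<beta> (Suc i) + int (\<alpha>!Suc i) = row_off \<alpha> \<beta> i + int (\<beta>!i)
         \<and> \<beta>!i \<le> \<alpha>!i \<and> \<beta>!i \<le> \<alpha>!Suc i"
  using assms unfolding overlap_valid_def by auto

lemma row_off_mono:
  assumes "overlap_valid \<alpha> \<beta>" "i \<le> i'" "i' < length \<alpha>"
  shows "row_off \<alpha> \<beta> i' \<le> row_off \<alpha> \<beta> i \<and>
         row_off \<alpha> \<beta> i' + int (\<alpha>!i') \<le> row_off \<alpha> \<beta> i + int (\<alpha>!i)"
  using assms(2,3)
proof (induction i' rule: dec_induct)
  case base thus ?case by simp
next
  case (step k)
  from row_off_step[OF assms(1), of k] step show ?case by auto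
qed

lemma mem_overlap_diagram: "(i,j) \<in> overlap_diagram \<alpha> \<beta> \<longleftrightarrow>
   i < length \<alpha> \<and> row_off \<alpha> \<beta> i < j \<and> j \<le> row_off \<alpha> \<beta> i + int (\<alpha>!i)"
  unfolding overlap_diagram_def by auto

definition rows_of :: "nat list \<Rightarrow> nat list \<Rightarrow> (nat \<times> int \<Rightarrow> nat) \<Rightarrow> nat list list" where
  "rows_of \<alpha> \<beta> T = map (\<lambda>i. map (\<lambda>j. T (i, row_off \<alpha> \<beta> i + 1 + int j)) [0..<\<alpha>!i]) [0..<length \<alpha>]"

definition filling_of :: "nat list \<Rightarrow> nat list \<Rightarrow> nat list list \<Rightarrow> (nat \<times> int \<Rightarrow> nat)" where
  "filling_of \<alpha> \<beta> W = (\<lambda>(i,j).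
     if (i,j) \<in> overlap_diagram \<alpha> \<beta> then W!i!nat (j - row_off \<alpha> \<beta> i - 1) else 0)"

lemma rows_of_nth:
  assumes "i < length \<alpha>" "j < \<alpha>!i"
  shows "rows_of \<alpha> \<beta> T ! i ! j = T (i, row_off \<alpha> \<beta> i + 1 + int j)"
  using assms by (simp add: rows_of_def)

lemma length_rows_of: "length (rows_of \<alpha> \<beta> T) = length \<alpha>"
  "i < length \<alpha> \<Longrightarrow> length (rows_of \<alpha> \<beta> T ! i) = \<alpha>!i"
  by (simp_all add: rows_of_def)

lemma filling_of_at:
  assumes "i < length \<alpha>" "j < \<alpha>!i"
  shows "filling_of \<alpha> \<beta> W (i, row_off \<alpha> \<beta> i + 1 + int j) = W!i!j"
  using assms by (simp add: filling_of_def mem_overlap_diagram)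

lemma row_tableauD:
  assumes "row_tableau \<alpha> \<beta> W"
  shows "length W = length \<alpha>" "\<And>i. i < length \<alpha> \<Longrightarrow> length (W!i) = \<alpha>!i"
    "\<And>i. i < length \<alpha> \<Longrightarrow> sorted (W!i)"
  using assms unfolding row_tableau_def row_word_def by auto

lemma is_ssytD:
  assumes "is_ssyt D T"
  shows "\<And>b. b \<in> D \<Longrightarrow> 1 \<le> T b" "\<And>b. b \<notin> D \<Longrightarrow> T b = 0"
    "\<And>i j j'. (i, j) \<in> D \<Longrightarrow> (i, j') \<in> D \<Longrightarrow> j \<le> j' \<Longrightarrow> T (i, j) \<le> T (i, j')"
    "\<And>i i' j. (i, j) \<in> D \<Longrightarrow> (i', j) \<in> D \<Longrightarrow> i < i' \<Longrightarrow> T (i, j) < T (i', j)"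
  using assms unfolding is_ssyt_def by blast+

lemma count_concat: "count (mset (concat W)) k = (\<Sum>i<length W. count (mset (W!i)) k)"
proof -
  have "count (mset (concat W)) k = sum_list (map (\<lambda>w. count (mset w) k) W)"
    by (induction W) auto
  thus ?thesis by (simp add: sum_list_sum_nth atLeast0LessThan)
qed

lemma count_mset_card: "count (mset xs) k = card {j. j < length xs \<and> xs!j = k}"
  by (simp add: count_mset length_filter_conv_card count_list_eq_length_filter eq_commute[of k])

lemma card_entries_eq_count:
  assumes "length W = length \<alpha>" "\<And>i. i < length \<alpha> \<Longrightarrow> length (W!i) = \<alpha>!i"
    "\<And>i j. i < length \<alpha> \<Longrightarrow> j < \<alpha>!i \<Longrightarrow> W!i!j = T (i, row_off \<alpha> \<beta> i + 1 + int j)"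
  shows "card {b \<in> overlap_diagram \<alpha> \<beta>. T b = k} = word_content W k"
proof -
  let ?off = "row_off \<alpha> \<beta>"
  let ?f = "\<lambda>(i,j). (i, ?off i + 1 + int j)"
  let ?S = "Sigma {..<length \<alpha>} (\<lambda>i. {j. j < \<alpha>!i \<and> W!i!j = k})"
  have inj: "inj_on ?f ?S"
  proof (rule inj_onI)
    fix p q assume "?f p = ?f q"
    thus "p = q" by (cases p; cases q) simp
  qed
  have img: "?f ` ?S = {b \<in> overlap_diagram \<alpha> \<beta>. T b = k}"
  proof
    show "?f ` ?S \<subseteq> {b \<in> overlap_diagram \<alpha> \<beta>. T b = k}"
      using assms(3) by (auto simp: mem_overlap_diagram)
  next
    show "{b \<in> overlap_diagram \<alpha> \<beta>. T b = k} \<subseteq> ?f ` ?S"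
    proof
      fix b assume b: "b \<in> {b \<in> overlap_diagram \<alpha> \<beta>. T b = k}"
      obtain i j where bij: "b = (i,j)" by (cases b)
      with b have i: "i < length \<alpha>" and j: "?off i < j" "j \<le> ?off i + int (\<alpha>!i)"
        and Tk: "T (i,j) = k" by (auto simp: mem_overlap_diagram)
      define a where "a = nat (j - ?off i - 1)"
      have ja: "j = ?off i + 1 + int a" using j unfolding a_def by simp
      have a: "a < \<alpha>!i" using j unfolding a_def by linarith
      have "(i,a) \<in> ?S" using assms(3)[OF i a] ja Tk i a by simp
      thus "b \<in> ?f ` ?S" using bij ja by (auto intro!: image_eqI[where x="(i,a)"])
    qed
  qed
  have "card {b \<in> overlap_diagram \<alpha> \<beta>. T b = k} = card ?S"
    using card_image[OF inj] img by simp
  also have "\<dots> = (\<Sum>i<length \<alpha>. card {j. j < \<alpha>!i \<and> W!i!j = k})"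
    by (rule card_SigmaI) auto
  also have "\<dots> = (\<Sum>i<length W. count (mset (W!i)) k)"
    using assms(1,2) by (auto simp: count_mset_card intro!: sum.cong)
  finally show ?thesis by (simp add: word_content_def count_concat)
qed

lemma filling_of_column_step:
  assumes v: "overlap_valid \<alpha> \<beta>" and R: "row_tableau \<alpha> \<beta> W"
    and d1: "(i,j) \<in> overlap_diagram \<alpha> \<beta>" and d2: "(Suc i, j) \<in> overlap_diagram \<alpha> \<beta>"
  shows "filling_of \<alpha> \<beta> W (i,j) < filling_of \<alpha> \<beta> W (Suc i, j)"
proof -
  let ?off = "row_off \<alpha> \<beta>"
  from d1 d2 have i: "Suc i < length \<alpha>" and j1: "?off i < j"
    and j2: "j \<le> ?off (Suc i) + int (\<alpha>!Suc i)"
    by (auto simp: mem_overlap_diagram)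
  note st = row_off_step[OF v i]
  define a where "a = nat (j - ?off i - 1)"
  have ja: "j = ?off i + 1 + int a" using j1 unfolding a_def by simp
  have a: "a < \<beta>!i" using j1 j2 st unfolding a_def by linarith
  have ilb: "i < length \<beta>" using v i unfolding overlap_valid_def by simp
  have lenS: "length (W!Suc i) = \<alpha>!Suc i" using row_tableauD(2)[OF R i] .
  have "W!i!a < W!Suc i!(length (W!Suc i) - \<beta>!i + a)"
    using R ilb a unfolding row_tableau_def compatible_def by blast
  moreover have "filling_of \<alpha> \<beta> W (i,j) = W!i!a"
    using d1 ja by (simp add: filling_of_def)
  moreover have "nat (j - ?off (Suc i) - 1) = \<alpha>!Suc i - \<beta>!i + a"
    using ja st by simp
  hence "filling_of \<alpha> \<beta> W (Suc i,j) = W!Suc i!(\<alpha>!Suc i - \<beta>!i + a)"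
    using d2 by (simp add: filling_of_def)
  ultimately show ?thesis using lenS by simp
qed

(* Columns of a valid overlap diagram are contiguous, so strictness propagates down a column. *)
lemma filling_of_column_strict:
  assumes v: "overlap_valid \<alpha> \<beta>" and R: "row_tableau \<alpha> \<beta> W"
  shows "(i,j) \<in> overlap_diagram \<alpha> \<beta> \<Longrightarrow> (i + Suc d, j) \<in> overlap_diagram \<alpha> \<beta> \<Longrightarrow>
     filling_of \<alpha> \<beta> W (i,j) < filling_of \<alpha> \<beta> W (i + Suc d, j)"
proof (induction d)
  case 0 thus ?case using filling_of_column_step[OF v R] by simp
next
  case (Suc d)
  let ?off = "row_off \<alpha> \<beta>"
  have l: "i + Suc (Suc d) < length \<alpha>" using Suc.prems by (simp add: mem_overlap_diagram)
  have m1: "?off (i + Suc d) \<le> ?off i" using row_off_mono[OF v, of i "i + Suc d"] l by simp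
  have m2: "?off (i + Suc (Suc d)) + int (\<alpha>!(i + Suc (Suc d))) \<le> ?off (i + Suc d) + int (\<alpha>!(i + Suc d))"
    using row_off_mono[OF v, of "i + Suc d" "i + Suc (Suc d)"] l by simp
  have mid: "(i + Suc d, j) \<in> overlap_diagram \<alpha> \<beta>"
    using Suc.prems m1 m2 l by (simp add: mem_overlap_diagram)
  have "filling_of \<alpha> \<beta> W (i,j) < filling_of \<alpha> \<beta> W (i + Suc d, j)"
    using Suc.IH Suc.prems(1) mid by simp
  also have "\<dots> < filling_of \<alpha> \<beta> W (Suc (i + Suc d), j)"
    using filling_of_column_step[OF v R mid] Suc.prems(2) by simp
  finally show ?case by simp
qed

lemma ssyt_filling_of:
  assumes v: "overlap_valid \<alpha> \<beta>" and R: "row_tableau \<alpha> \<beta> W"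
  shows "is_ssyt (overlap_diagram \<alpha> \<beta>) (filling_of \<alpha> \<beta> W)"
proof -
  let ?D = "overlap_diagram \<alpha> \<beta>" and ?T = "filling_of \<alpha> \<beta> W" and ?off = "row_off \<alpha> \<beta>"
  have pos: "\<forall>b\<in>?D. 1 \<le> ?T b"
  proof
    fix b assume b: "b \<in> ?D"
    obtain i j where bij: "b = (i,j)" by (cases b)
    with b have i: "i < length \<alpha>" and "?off i < j" "j \<le> ?off i + int (\<alpha>!i)"
      by (auto simp: mem_overlap_diagram)
    hence a: "nat (j - ?off i - 1) < length (W!i)" using row_tableauD(2)[OF R] by auto
    have "1 \<le> W!i!nat (j - ?off i - 1)"
      using R i nth_mem[OF a] unfolding row_tableau_def row_word_def by blast
    thus "1 \<le> ?T b" using b bij by (simp add: filling_of_def)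
  qed
  have zero: "\<forall>b. b \<notin> ?D \<longrightarrow> ?T b = 0" by (auto simp: filling_of_def)
  have row: "\<forall>i j j'. (i, j) \<in> ?D \<longrightarrow> (i, j') \<in> ?D \<longrightarrow> j \<le> j' \<longrightarrow> ?T (i, j) \<le> ?T (i, j')"
  proof (intro allI impI)
    fix i j j' assume d: "(i,j) \<in> ?D" "(i,j') \<in> ?D" "j \<le> j'"
    hence i: "i < length \<alpha>" and b: "?off i < j" "j' \<le> ?off i + int (\<alpha>!i)"
      by (auto simp: mem_overlap_diagram)
    have "W!i!nat (j - ?off i - 1) \<le> W!i!nat (j' - ?off i - 1)"
      by (rule sorted_nth_mono[OF row_tableauD(3)[OF R i]])
        (use b d(3) row_tableauD(2)[OF R i] in linarith)+
    thus "?T (i, j) \<le> ?T (i, j')" using d by (simp add: filling_of_def)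
  qed
  have col: "\<forall>i i' j. (i, j) \<in> ?D \<longrightarrow> (i', j) \<in> ?D \<longrightarrow> i < i' \<longrightarrow> ?T (i, j) < ?T (i', j)"
  proof (intro allI impI)
    fix i i' j assume d: "(i,j) \<in> ?D" "(i',j) \<in> ?D" "i < i'"
    obtain d' where "i' = i + Suc d'" using less_imp_Suc_add[OF d(3)] by auto
    thus "?T (i, j) < ?T (i', j)" using filling_of_column_strict[OF v R] d by simp
  qed
  show ?thesis unfolding is_ssyt_def using pos zero row col by blast
qed

lemma row_word_rows_of:
  assumes S: "is_ssyt (overlap_diagram \<alpha> \<beta>) T" and i: "i < length \<alpha>"
  shows "row_word (\<alpha>!i) (rows_of \<alpha> \<beta> T ! i)"
proof -
  let ?W = "rows_of \<alpha> \<beta> T" and ?off = "row_off \<alpha> \<beta>" and ?D = "overlap_diagram \<alpha> \<beta>"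
  note sp = is_ssytD[OF S]
  have "sorted (?W!i)"
  proof (rule sorted_iff_nth_mono[THEN iffD2], intro allI impI)
    fix j j' assume jj: "j \<le> j'" "j' < length (?W!i)"
    hence "j' < \<alpha>!i" using length_rows_of(2)[OF i] by simp
    hence "(i, ?off i + 1 + int j) \<in> ?D" "(i, ?off i + 1 + int j') \<in> ?D"
      using jj i by (auto simp: mem_overlap_diagram)
    from sp(3)[OF this] jj(1) have "T (i, ?off i + 1 + int j) \<le> T (i, ?off i + 1 + int j')" by simp
    thus "?W!i!j \<le> ?W!i!j'" using rows_of_nth[OF i] jj \<open>j' < \<alpha>!i\<close> by simp
  qed
  moreover have "\<forall>v\<in>set (?W!i). 1 \<le> v"
  proof
    fix v assume "v \<in> set (?W!i)"
    then obtain j where j: "j < \<alpha>!i" "v = ?W!i!j"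
      using length_rows_of(2)[OF i] by (auto simp: in_set_conv_nth)
    hence "(i, ?off i + 1 + int j) \<in> ?D" using i by (auto simp: mem_overlap_diagram)
    thus "1 \<le> v" using sp(1) j rows_of_nth[OF i j(1)] by simp
  qed
  ultimately show ?thesis using length_rows_of(2)[OF i] unfolding row_word_def by simp
qed

lemma compatible_rows_of:
  assumes v: "overlap_valid \<alpha> \<beta>" and S: "is_ssyt (overlap_diagram \<alpha> \<beta>) T" and i: "i < length \<beta>"
  shows "compatible (\<beta>!i) (rows_of \<alpha> \<beta> T ! i) (rows_of \<alpha> \<beta> T ! Suc i)"
  unfolding compatible_def
proof (intro allI impI)
  let ?W = "rows_of \<alpha> \<beta> T" and ?off = "row_off \<alpha> \<beta>" and ?D = "overlap_diagram \<alpha> \<beta>"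
  fix a assume a: "a < \<beta>!i"
  have si: "Suc i < length \<alpha>" using v i unfolding overlap_valid_def by simp
  note st = row_off_step[OF v si]
  have ai: "a < \<alpha>!i" and a2: "\<alpha>!Suc i - \<beta>!i + a < \<alpha>!Suc i" using a st by auto
  have eq: "?off (Suc i) + 1 + int (\<alpha>!Suc i - \<beta>!i + a) = ?off i + 1 + int a" using st by simp
  have d1: "(i, ?off i + 1 + int a) \<in> ?D" using ai si by (auto simp: mem_overlap_diagram)
  have "(Suc i, ?off (Suc i) + 1 + int (\<alpha>!Suc i - \<beta>!i + a)) \<in> ?D"
    using a2 si by (auto simp: mem_overlap_diagram)
  hence d2: "(Suc i, ?off i + 1 + int a) \<in> ?D" unfolding eq .
  have "T (i, ?off i + 1 + int a) < T (Suc i, ?off i + 1 + int a)" using is_ssytD(4)[OF S d1 d2] by simp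
  moreover have "?W!i!a = T (i, ?off i + 1 + int a)" using rows_of_nth[OF _ ai] si by simp
  moreover have "?W!Suc i!(\<alpha>!Suc i - \<beta>!i + a) = T (Suc i, ?off i + 1 + int a)"
    using rows_of_nth[OF si a2, of \<beta> T] unfolding eq .
  ultimately show "?W!i!a < ?W!Suc i!(length (?W!Suc i) - \<beta>!i + a)"
    using length_rows_of(2)[OF si] by simp
qed

lemma row_tableau_rows_of:
  assumes "overlap_valid \<alpha> \<beta>" "is_ssyt (overlap_diagram \<alpha> \<beta>) T"
  shows "row_tableau \<alpha> \<beta> (rows_of \<alpha> \<beta> T)"
  unfolding row_tableau_def
  using row_word_rows_of[OF assms(2)] compatible_rows_of[OF assms] length_rows_of(1) by blast

lemma filling_of_rows_of:
  assumes S: "is_ssyt (overlap_diagram \<alpha> \<beta>) T"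
  shows "filling_of \<alpha> \<beta> (rows_of \<alpha> \<beta> T) = T"
proof
  fix b :: "nat \<times> int"
  obtain i j where b: "b = (i,j)" by (cases b)
  show "filling_of \<alpha> \<beta> (rows_of \<alpha> \<beta> T) b = T b"
  proof (cases "b \<in> overlap_diagram \<alpha> \<beta>")
    case True
    hence i: "i < length \<alpha>" and j: "row_off \<alpha> \<beta> i < j" "j \<le> row_off \<alpha> \<beta> i + int (\<alpha>!i)"
      using b by (auto simp: mem_overlap_diagram)
    have n: "nat (j - row_off \<alpha> \<beta> i - 1) < \<alpha>!i" using j by linarith
    have e: "row_off \<alpha> \<beta> i + 1 + int (nat (j - row_off \<alpha> \<beta> i - 1)) = j" using j by linarith
    show ?thesis using True b rows_of_nth[OF i n] e by (simp add: filling_of_def)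
  next
    case False thus ?thesis using is_ssytD(2)[OF S] b by (simp add: filling_of_def)
  qed
qed

lemma rows_of_filling_of:
  assumes R: "row_tableau \<alpha> \<beta> W"
  shows "rows_of \<alpha> \<beta> (filling_of \<alpha> \<beta> W) = W"
proof (rule nth_equalityI)
  show "length (rows_of \<alpha> \<beta> (filling_of \<alpha> \<beta> W)) = length W"
    using row_tableauD(1)[OF R] length_rows_of(1) by simp
next
  fix i assume "i < length (rows_of \<alpha> \<beta> (filling_of \<alpha> \<beta> W))"
  hence i: "i < length \<alpha>" using length_rows_of(1) by simp
  show "rows_of \<alpha> \<beta> (filling_of \<alpha> \<beta> W) ! i = W ! i"
  proof (rule nth_equalityI)
    show "length (rows_of \<alpha> \<beta> (filling_of \<alpha> \<beta> W) ! i) = length (W!i)"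
      using length_rows_of(2)[OF i] row_tableauD(2)[OF R i] by simp
  next
    fix j assume "j < length (rows_of \<alpha> \<beta> (filling_of \<alpha> \<beta> W) ! i)"
    hence j: "j < \<alpha>!i" using length_rows_of(2)[OF i] by simp
    show "rows_of \<alpha> \<beta> (filling_of \<alpha> \<beta> W) ! i ! j = W ! i ! j"
      using rows_of_nth[OF i j] filling_of_at[OF i j] by simp
  qed
qed

(* Skew Schur coefficients count row tableaux: reading rows is a content-preserving
   bijection between SSYT of shape (alpha | beta) and row tableaux. *)
lemma skew_schur_eq_card_row_tableaux:
  assumes v: "overlap_valid \<alpha> \<beta>"
  shows "skew_schur \<alpha> \<beta> c = int (card {W. row_tableau \<alpha> \<beta> W \<and> word_content W = c})"
proof -
  let ?D = "overlap_diagram \<alpha> \<beta>"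
  let ?ST = "{T. is_ssyt ?D T \<and> (\<forall>k. card {b \<in> ?D. T b = k} = c k)}"
  let ?SW = "{W. row_tableau \<alpha> \<beta> W \<and> word_content W = c}"
  have cT: "card {b \<in> ?D. T b = k} = word_content (rows_of \<alpha> \<beta> T) k" for T k
    by (rule card_entries_eq_count) (simp_all add: length_rows_of rows_of_nth)
  have cW: "card {b \<in> ?D. filling_of \<alpha> \<beta> W b = k} = word_content W k"
    if R: "row_tableau \<alpha> \<beta> W" for W k
    by (rule card_entries_eq_count) (simp_all add: row_tableauD[OF R] filling_of_at)
  have "bij_betw (rows_of \<alpha> \<beta>) ?ST ?SW"
  proof (rule bij_betw_byWitness[where f'="filling_of \<alpha> \<beta>"])
    show "\<forall>T\<in>?ST. filling_of \<alpha> \<beta> (rows_of \<alpha> \<beta> T) = T" using filling_of_rows_of by blast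
    show "\<forall>W\<in>?SW. rows_of \<alpha> \<beta> (filling_of \<alpha> \<beta> W) = W" using rows_of_filling_of by blast
    show "rows_of \<alpha> \<beta> ` ?ST \<subseteq> ?SW"
      using cT row_tableau_rows_of[OF v] by auto
    show "filling_of \<alpha> \<beta> ` ?SW \<subseteq> ?ST"
      using cW ssyt_filling_of[OF v] by auto
  qed
  hence "card ?ST = card ?SW" by (rule bij_betw_same_card)
  thus ?thesis unfolding skew_schur_def using v by simp
qed

lemma finite_row_tableaux: "finite {W. row_tableau \<alpha> \<beta> W \<and> word_content W = c}"
proof (cases "{W. row_tableau \<alpha> \<beta> W \<and> word_content W = c} = {}")
  case True show ?thesis by (subst True) simp
next
  case False
  then obtain W0 where W0: "row_tableau \<alpha> \<beta> W0" "word_content W0 = c" by auto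
  let ?A = "set (concat W0)"
  let ?R = "{xs. set xs \<subseteq> ?A \<and> length xs \<le> sum_list \<alpha>}"
  have fR: "finite ?R" by (rule finite_lists_length_le) simp
  have sub: "{W. row_tableau \<alpha> \<beta> W \<and> word_content W = c} \<subseteq> {Ws. set Ws \<subseteq> ?R \<and> length Ws \<le> length \<alpha>}"
  proof
    fix W assume W: "W \<in> {W. row_tableau \<alpha> \<beta> W \<and> word_content W = c}"
    have "mset (concat W) = mset (concat W0)"
      using W W0 unfolding word_content_def by (auto simp: multiset_eq_iff)
    hence "set (concat W) = ?A" by (metis set_mset_mset)
    moreover have "length xs \<le> sum_list \<alpha>" if xs: "xs \<in> set W" for xs
    proof -
      obtain i where i: "i < length W" "W!i = xs" using xs by (metis in_set_conv_nth)
      have "length (W!i) = \<alpha>!i" "i < length \<alpha>" using W i row_tableauD by auto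
      thus ?thesis using i member_le_sum_list[of "\<alpha>!i" \<alpha>] by simp
    qed
    ultimately show "W \<in> {Ws. set Ws \<subseteq> ?R \<and> length Ws \<le> length \<alpha>}"
      using W row_tableauD(1) by auto
  qed
  show ?thesis by (rule finite_subset[OF sub finite_lists_length_le[OF fR]])
qed

section \<open>Compatibility of two rows and the excess function\<close>

definition count_le :: "nat list \<Rightarrow> nat \<Rightarrow> nat" where
  "count_le z h = size (filter_mset (\<lambda>a. a \<le> h) (mset z))"

definition count_lt :: "nat list \<Rightarrow> nat \<Rightarrow> nat" where
  "count_lt w h = size (filter_mset (\<lambda>a. a < h) (mset w))"

lemma size_filter_mset_card: "size (filter_mset P (mset xs)) = card {l. l < length xs \<and> P (xs!l)}"
  by (simp flip: mset_filter add: length_filter_conv_card)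

(* Compatibility forces, for every threshold h, few letters \<le> h in the lower row:
   all of them except the first length v - b sit under letters < h of the upper row. *)
lemma compatible_count_bound:
  assumes A: "compatible b u v" and bu: "b \<le> length u" and bv: "b \<le> length v"
  shows "count_le v h \<le> count_lt u h + (length v - b)"
proof -
  let ?n = "length v"
  have sub: "{l. l < ?n \<and> v!l \<le> h} \<subseteq> {..<?n - b} \<union> (\<lambda>j. ?n - b + j) ` {j. j < length u \<and> u!j < h}"
  proof
    fix l assume l: "l \<in> {l. l < ?n \<and> v!l \<le> h}"
    show "l \<in> {..<?n - b} \<union> (\<lambda>j. ?n - b + j) ` {j. j < length u \<and> u!j < h}"
    proof (cases "l < ?n - b")
      case False
      define j where "j = l - (?n - b)"
      have lj: "l = ?n - b + j" "j < b" using False l bv unfolding j_def by auto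
      have "u!j < v!(?n - b + j)" using A lj(2) unfolding compatible_def by blast
      hence "u!j < h" using l lj(1) by simp
      thus ?thesis using lj bu by auto
    qed simp
  qed
  have "count_le v h = card {l. l < ?n \<and> v!l \<le> h}" unfolding count_le_def size_filter_mset_card ..
  also have "\<dots> \<le> card ({..<?n - b} \<union> (\<lambda>j. ?n - b + j) ` {j. j < length u \<and> u!j < h})"
    by (rule card_mono[OF _ sub]) simp
  also have "\<dots> \<le> card {..<?n - b} + card ((\<lambda>j. ?n - b + j) ` {j. j < length u \<and> u!j < h})"
    by (rule card_Un_le)
  also have "\<dots> \<le> (?n - b) + card {j. j < length u \<and> u!j < h}"
    using card_image_le[of "{j. j < length u \<and> u!j < h}" "\<lambda>j. ?n - b + j"] by simp
  also have "card {j. j < length u \<and> u!j < h} = count_lt u h"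
    unfolding count_lt_def size_filter_mset_card ..
  finally show ?thesis by simp
qed

(* Conversely, for sorted rows the count bounds imply compatibility: a violated column
   u!j \<ge> v!(length v - b + j) is detected at the threshold h = v!(length v - b + j). *)
lemma count_bound_compatible:
  assumes su: "sorted u" and sv: "sorted v" and bv: "b \<le> length v"
    and C: "\<And>h. count_le v h \<le> count_lt u h + (length v - b)"
  shows "compatible b u v"
  unfolding compatible_def
proof (intro allI impI, rule ccontr)
  fix j assume j: "j < b" and n: "\<not> u!j < v!(length v - b + j)"
  let ?n = "length v"
  define h0 where "h0 = v!(?n - b + j)"
  have "{..?n - b + j} \<subseteq> {l. l < ?n \<and> v!l \<le> h0}"
    using j bv sorted_nth_mono[OF sv] unfolding h0_def by auto
  hence c1: "Suc (?n - b + j) \<le> count_le v h0" unfolding count_le_def size_filter_mset_card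
    using card_mono[of "{l. l < ?n \<and> v!l \<le> h0}" "{..?n - b + j}"] by simp
  have "{l. l < length u \<and> u!l < h0} \<subseteq> {..<j}"
  proof
    fix l assume l: "l \<in> {l. l < length u \<and> u!l < h0}"
    show "l \<in> {..<j}"
    proof (rule ccontr)
      assume "l \<notin> {..<j}"
      hence "u!j \<le> u!l" using sorted_nth_mono[OF su] l by simp
      thus False using n l unfolding h0_def by simp
    qed
  qed
  hence c2: "count_lt u h0 \<le> j" unfolding count_lt_def size_filter_mset_card
    using card_mono[of "{..<j}"] by fastforce
  show False using C[of h0] c1 c2 by simp
qed

definition excess :: "nat list \<Rightarrow> nat list \<Rightarrow> nat \<Rightarrow> int" where
  "excess u v h = int (count_le v h) - int (count_lt u h)"

lemma compatible_iff_excess: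
  assumes "sorted u" "sorted v" "b \<le> length u" "b \<le> length v"
  shows "compatible b u v \<longleftrightarrow> (\<forall>h. excess u v h \<le> int (length v) - int b)"
proof -
  have "(count_le v h \<le> count_lt u h + (length v - b)) \<longleftrightarrow>
        (excess u v h \<le> int (length v) - int b)" for h
    using assms(4) unfolding excess_def by linarith
  thus ?thesis using compatible_count_bound[OF _ assms(3,4)] count_bound_compatible[OF assms(1,2,4)]
    by blast
qed

lemma count_le_insort: "count_le (insort v z) h = count_le z h + of_bool (v \<le> h)"
  unfolding count_le_def by simp

lemma count_lt_insort: "count_lt (insort v w) h = count_lt w h + of_bool (v < h)"
  unfolding count_lt_def by simp

lemma count_le_Cons: "count_le (v # z) h = count_le z h + of_bool (v \<le> h)"
  unfolding count_le_def by simp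

lemma count_lt_Cons: "count_lt (v # w) h = count_lt w h + of_bool (v < h)"
  unfolding count_lt_def by simp

lemma count_le_append: "count_le (y @ z) h = count_le y h + count_le z h"
  unfolding count_le_def by simp

lemma count_le_remove1:
  assumes "v \<in> set z" shows "count_le z h = count_le (remove1 v z) h + of_bool (v \<le> h)"
  using count_le_insort[of v "remove1 v z" h] assms unfolding count_le_def by simp

lemma count_lt_remove1:
  assumes "v \<in> set w" shows "count_lt w h = count_lt (remove1 v w) h + of_bool (v < h)"
  using count_lt_insort[of v "remove1 v w" h] assms unfolding count_lt_def by simp

lemma count_le_all: "\<forall>a\<in>set y. a \<le> h \<Longrightarrow> count_le y h = length y"
  unfolding count_le_def by (induction y) auto

lemma count_lt_all: "\<forall>a\<in>set y. a < h \<Longrightarrow> count_lt y h = length y"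
  unfolding count_lt_def by (induction y) auto

lemma count_le_none: "\<forall>a\<in>set y. h < a \<Longrightarrow> count_le y h = 0"
  unfolding count_le_def by (induction y) auto

lemma count_lt_none: "\<forall>a\<in>set y. h \<le> a \<Longrightarrow> count_lt y h = 0"
  unfolding count_lt_def by (induction y) auto

lemma count_le_le_length: "count_le y h \<le> length y"
  unfolding count_le_def by (induction y) auto

lemma count_le_less_length: "a \<in> set y \<Longrightarrow> h < a \<Longrightarrow> count_le y h < length y"
  unfolding count_le_def by (metis length_filter_less mset_filter not_le size_mset)

lemma count_lt_eq_0_iff: "count_lt w h = 0 \<longleftrightarrow> (\<forall>a\<in>set w. h \<le> a)"
  unfolding count_lt_def by (induction w) auto

lemma excess_lift:
  "v \<in> set z \<Longrightarrow> excess (insort v w) (remove1 v z) h = excess w z h - of_bool (v \<le> h) - of_bool (v < h)"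
  unfolding excess_def by (simp add: count_le_remove1 count_lt_insort)

lemma excess_drop:
  "v \<in> set w \<Longrightarrow> excess (remove1 v w) (insort v z) h = excess w z h + of_bool (v \<le> h) + of_bool (v < h)"
  unfolding excess_def by (simp add: count_lt_remove1 count_le_insort)

lemma size_filter_le_Suc:
  "size (filter_mset (\<lambda>a. a \<le> Suc h) M) = size (filter_mset (\<lambda>a. a \<le> h) M) + count M (Suc h)"
  by (induction M) auto

lemma size_filter_lt_Suc:
  "size (filter_mset (\<lambda>a. a < Suc h) M) = size (filter_mset (\<lambda>a. a < h) M) + count M h"
  by (induction M) auto

lemma excess_Suc:
  "excess w z (Suc h) = excess w z h + int (count (mset z) (Suc h)) - int (count (mset w) h)"
  unfolding excess_def count_le_def count_lt_def by (simp add: size_filter_le_Suc size_filter_lt_Suc)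

lemma excess_0: "\<forall>a\<in>set z. 1 \<le> a \<Longrightarrow> excess w z 0 = 0"
  unfolding excess_def using count_le_none[of z 0] count_lt_none[of w 0] by force

lemma excess_large:
  assumes "\<forall>a\<in>set w \<union> set z. a < K" "K \<le> h"
  shows "excess w z h = int (length z) - int (length w)"
proof -
  have "\<forall>a\<in>set z. a \<le> h" "\<forall>a\<in>set w. a < h"
    using assms by (auto intro: less_imp_le less_le_trans)
  thus ?thesis unfolding excess_def by (simp add: count_le_all count_lt_all)
qed

definition letter_bound :: "nat list \<Rightarrow> nat list \<Rightarrow> nat" where
  "letter_bound w z = Suc (Max (insert 0 (set (w @ z))))"

lemma letter_bound: "\<forall>a\<in>set w \<union> set z. a < letter_bound w z"
  unfolding letter_bound_def by (auto simp: le_imp_less_Suc)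

(* The excess is constant above all letters, so it attains a maximum. *)
lemma excess_has_max: "\<exists>h0. \<forall>h. excess w z h \<le> excess w z h0"
proof -
  let ?K = "letter_bound w z"
  have "Max (excess w z ` {..?K}) \<in> excess w z ` {..?K}" by (rule Max_in) auto
  then obtain h0 where h0: "h0 \<in> {..?K}" "excess w z h0 = Max (excess w z ` {..?K})"
    by (metis imageE)
  have "excess w z h \<le> excess w z h0" for h
  proof (cases "h \<le> ?K")
    case True thus ?thesis using h0 Max_ge[of "excess w z ` {..?K}" "excess w z h"] by simp
  next
    case False
    hence "excess w z h = excess w z ?K" using excess_large[OF letter_bound] by simp
    thus ?thesis using h0 by simp
  qed
  thus ?thesis by blast
qed

section \<open>Peaks of the excess: moving one letter between two rows\<close>

(* The first and the last threshold at which the excess attains its maximum.  The first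
   peak always exists; the last one exists as soon as the upper row is longer. *)
definition first_peak :: "nat list \<Rightarrow> nat list \<Rightarrow> nat" where
  "first_peak w z = (LEAST h. \<forall>h'. excess w z h' \<le> excess w z h)"

definition last_peak :: "nat list \<Rightarrow> nat list \<Rightarrow> nat" where
  "last_peak w z = (GREATEST h. \<forall>h'. excess w z h' \<le> excess w z h)"

definition max_excess :: "nat list \<Rightarrow> nat list \<Rightarrow> int" where
  "max_excess w z = excess w z (first_peak w z)"

lemma excess_le_max: "excess w z h \<le> max_excess w z"
  using LeastI_ex[OF excess_has_max[of w z]] unfolding max_excess_def first_peak_def by blast

lemma max_excess_eqI: "(\<And>h. excess w z h \<le> excess w z p) \<Longrightarrow> max_excess w z = excess w z p"
  using excess_le_max[of w z p] excess_le_max[of w z] order_antisym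
  unfolding max_excess_def by metis

lemma excess_before_first_peak: "h < first_peak w z \<Longrightarrow> excess w z h < max_excess w z"
proof -
  assume "h < first_peak w z"
  hence "\<not> (\<forall>h'. excess w z h' \<le> excess w z h)" unfolding first_peak_def by (rule not_less_Least)
  thus ?thesis using excess_le_max[of w z] by (meson not_le order_less_le_trans)
qed

lemma first_peak_eqI:
  assumes "\<And>h. excess w z h \<le> excess w z p" "\<And>h. h < p \<Longrightarrow> excess w z h < excess w z p"
  shows "first_peak w z = p"
proof (rule ccontr)
  assume "first_peak w z \<noteq> p"
  hence "first_peak w z < p \<or> p < first_peak w z" by auto
  thus False using assms excess_before_first_peak[of p w z] max_excess_eqI[of w z p]
    unfolding max_excess_def by fastforce
qed

(* With a positive lower row the excess vanishes at 0, so the maximal excess is \<ge> 0. *)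
lemma max_excess_nonneg: "\<forall>a\<in>set z. 1 \<le> a \<Longrightarrow> 0 \<le> max_excess w z"
  using excess_le_max[of w z 0] excess_0 by simp

lemma compatible_iff_max_excess:
  assumes "sorted u" "sorted v" "b \<le> length u" "b \<le> length v"
  shows "compatible b u v \<longleftrightarrow> max_excess u v \<le> int (length v) - int b"
  unfolding compatible_iff_excess[OF assms]
  by (metis excess_le_max max_excess_def order_trans)

(* A positive maximum is first reached by counting a letter of the lower row. *)
lemma first_peak_mem:
  assumes pos: "\<forall>a\<in>set z. 1 \<le> a" and M: "0 < max_excess w z"
  shows "first_peak w z \<in> set z"
proof -
  obtain p where p: "first_peak w z = Suc p"
    using M excess_0[OF pos, of w] unfolding max_excess_def by (cases "first_peak w z") auto
  have "excess w z p < excess w z (Suc p)"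
    using excess_before_first_peak[of p w z] p unfolding max_excess_def by simp
  hence "0 < count (mset z) (Suc p)" using excess_Suc[of w z p] by linarith
  thus ?thesis using p by (simp only: count_greater_zero_iff set_mset_mset)
qed

context
  fixes w z :: "nat list"
  assumes pos: "\<forall>a\<in>set z. 1 \<le> a" and longer: "length z < length w"
begin

(* Maximisers lie below all letters: above them the excess is negative. *)
lemma maximiser_bounded:
  assumes "\<forall>h'. excess w z h' \<le> excess w z h" shows "h \<le> letter_bound w z"
proof (rule ccontr)
  assume "\<not> h \<le> letter_bound w z"
  hence "excess w z h = int (length z) - int (length w)"
    using excess_large[OF letter_bound[of w z]] by simp
  thus False using assms[rule_format, of 0] excess_0[OF pos, of w] longer by simp
qed

lemma last_peak_max: "excess w z (last_peak w z) = max_excess w z"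
proof -
  obtain h0 where "\<forall>h. excess w z h \<le> excess w z h0" using excess_has_max by blast
  hence "\<forall>h'. excess w z h' \<le> excess w z (last_peak w z)" unfolding last_peak_def
    by (rule GreatestI_nat[where b="letter_bound w z"]) (use maximiser_bounded in blast)
  thus ?thesis using max_excess_eqI by metis
qed

lemma excess_after_last_peak: "last_peak w z < h \<Longrightarrow> excess w z h < max_excess w z"
proof (rule ccontr)
  assume h: "last_peak w z < h" and "\<not> excess w z h < max_excess w z"
  hence "\<forall>h'. excess w z h' \<le> excess w z h" using excess_le_max by (meson not_less order_trans)
  hence "h \<le> last_peak w z" unfolding last_peak_def
    by (rule Greatest_le_nat[where b="letter_bound w z"]) (use maximiser_bounded in blast)
  thus False using h by simp
qed

lemma last_peak_eqI:
  assumes "\<And>h. excess w z h \<le> excess w z p" "\<And>h. p < h \<Longrightarrow> excess w z h < excess w z p"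
  shows "last_peak w z = p"
proof (rule ccontr)
  assume "last_peak w z \<noteq> p"
  hence "last_peak w z < p \<or> p < last_peak w z" by auto
  thus False using assms excess_after_last_peak[of p] last_peak_max max_excess_eqI[of w z p]
    by fastforce
qed

(* The maximum is last attained just before skipping a letter of the upper row. *)
lemma last_peak_mem: "last_peak w z \<in> set w"
proof -
  have "excess w z (Suc (last_peak w z)) < excess w z (last_peak w z)"
    using excess_after_last_peak[of "Suc (last_peak w z)"] last_peak_max by simp
  hence "0 < count (mset w) (last_peak w z)" using excess_Suc[of w z "last_peak w z"] by linarith
  thus ?thesis by (simp only: count_greater_zero_iff set_mset_mset)
qed

end

lemma lift_first_peak:
  assumes pos: "\<forall>a\<in>set z. 1 \<le> a" and M: "0 < max_excess w z" and len: "length z \<le> Suc (length w)"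
  defines "p \<equiv> first_peak w z"
  shows "p \<in> set z"
    and "max_excess (insort p w) (remove1 p z) = max_excess w z - 1"
    and "last_peak (insort p w) (remove1 p z) = p"
proof -
  show pz: "p \<in> set z" unfolding p_def by (rule first_peak_mem[OF pos M])
  let ?e = "excess (insort p w) (remove1 p z)"
  have e: "?e h = excess w z h - of_bool (p \<le> h) - of_bool (p < h)" for h
    by (rule excess_lift[OF pz])
  have le: "?e h \<le> ?e p" for h
    using e[of h] e[of p] excess_le_max[of w z h] excess_before_first_peak[of h w z]
    unfolding p_def max_excess_def by (cases "h < first_peak w z") auto
  have at_p: "?e p = max_excess w z - 1" using e[of p] unfolding p_def max_excess_def by simp
  show "max_excess (insort p w) (remove1 p z) = max_excess w z - 1"
    using max_excess_eqI[OF le] at_p by simp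
  have pos': "\<forall>a\<in>set (remove1 p z). 1 \<le> a" using pos by (meson notin_set_remove1)
  have len': "length (remove1 p z) < length (insort p w)" using len pz by (simp add: length_remove1)
  show "last_peak (insort p w) (remove1 p z) = p"
  proof (rule last_peak_eqI[OF pos' len' le])
    fix h assume "p < h"
    thus "?e h < ?e p"
      using e[of h] e[of p] excess_le_max[of w z h] unfolding p_def max_excess_def by simp
  qed
qed

lemma drop_last_peak:
  assumes pos: "\<forall>a\<in>set z. 1 \<le> a" and len: "length z < length w"
  defines "p \<equiv> last_peak w z"
  shows "p \<in> set w"
    and "max_excess (remove1 p w) (insort p z) = max_excess w z + 1"
    and "first_peak (remove1 p w) (insort p z) = p"
proof -
  show pw: "p \<in> set w" unfolding p_def by (rule last_peak_mem[OF pos len])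
  let ?e = "excess (remove1 p w) (insort p z)"
  have e: "?e h = excess w z h + of_bool (p \<le> h) + of_bool (p < h)" for h
    by (rule excess_drop[OF pw])
  have peak: "excess w z p = max_excess w z" unfolding p_def by (rule last_peak_max[OF pos len])
  have le: "?e h \<le> ?e p" for h
    using e[of h] e[of p] peak excess_le_max[of w z h] excess_after_last_peak[OF pos len, of h]
    unfolding p_def[symmetric] by (cases "p < h") auto
  show "max_excess (remove1 p w) (insort p z) = max_excess w z + 1"
    using max_excess_eqI[OF le] e[of p] peak by simp
  show "first_peak (remove1 p w) (insort p z) = p"
  proof (rule first_peak_eqI[OF le])
    fix h assume "h < p"
    thus "?e h < ?e p" using e[of h] e[of p] peak excess_le_max[of w z h] by simp
  qed
qed

(* If the upper row is longer by at least two, a letter \<ge> p survives the removal of the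
   last peak letter p: the nonnegative excess at p leaves at most length z letters below p. *)
lemma drop_last_peak_keeps_large:
  assumes pos: "\<forall>a\<in>set z. 1 \<le> a" and len: "length z + 2 \<le> length w"
  defines "p \<equiv> last_peak w z"
  shows "\<exists>b\<in>set (remove1 p w). p \<le> b"
proof (rule ccontr)
  assume "\<not> (\<exists>b\<in>set (remove1 p w). p \<le> b)"
  hence all_below: "count_lt (remove1 p w) p = length (remove1 p w)"
    by (intro count_lt_all) auto
  have len': "length z < length w" using len by simp
  have pw: "p \<in> set w" unfolding p_def by (rule last_peak_mem[OF pos len'])
  have "0 \<le> excess w z p"
    unfolding p_def last_peak_max[OF pos len'] by (rule max_excess_nonneg[OF pos])
  hence "count_lt w p \<le> length z"
    using count_le_le_length[of z p] unfolding excess_def by linarith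
  thus False using all_below count_lt_remove1[OF pw, of p] pw len by (simp add: length_remove1)
qed

section \<open>Splitting a row and merging two rows\<close>

lemma sorted_le_last: "sorted y \<Longrightarrow> a \<in> set y \<Longrightarrow> a \<le> last y"
  by (induction y rule: rev_induct) (auto simp: sorted_append)

lemma split_merged_row:
  assumes sw': "sorted w'" and sg: "sorted g" and n: "1 \<le> n" "n \<le> length w'"
    and p: "1 \<le> p" and lg: "length g = n - 1 + p" and C: "compatible n w' g"
  defines "v \<equiv> hd w'" and "y \<equiv> take p g" and "r \<equiv> drop p g"
  shows "v < last y" and "\<forall>b\<in>set r. last y \<le> b"
    and "max_excess (tl w') (v # r) = 1" and "first_peak (tl w') (v # r) = v"
proof -
  define w where "w = tl w'"
  have w': "w' = v # w" using n unfolding v_def w_def by (cases w') auto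
  have g: "g = y @ r" and ly: "length y = p" unfolding y_def r_def using lg p by auto
  have yne: "y \<noteq> []" using ly p by auto
  have "w'!0 < g!(length g - n)" using C[unfolded compatible_def, rule_format, of 0] n by simp
  moreover have "g!(length g - n) = last y"
    using lg ly yne n p unfolding g by (simp add: nth_append last_conv_nth)
  ultimately show vy: "v < last y" using w' by simp
  show ry: "\<forall>b\<in>set r. last y \<le> b" using sg yne unfolding g by (simp add: sorted_append)
  have wv: "\<forall>a\<in>set w. v \<le> a" using sw' unfolding w' by simp
  have rv: "\<forall>b\<in>set r. v < b" using ry vy by force
  have bound: "excess w' g h \<le> int (length g) - int n" for h
    using compatible_iff_excess[OF sw' sg n(2)] C lg p by simp
  let ?e = "excess w (v # r)"
  have le1: "?e h \<le> 1" for h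
  proof (cases "h < last y")
    case True
    hence "count_le r h = 0" using ry by (intro count_le_none) force
    thus ?thesis unfolding excess_def by (simp add: count_le_Cons)
  next
    case False
    hence vh: "v < h" and "count_le y h = p" using vy ly sorted_append sg g
      by (auto intro!: count_le_all dest: sorted_le_last simp: sorted_append)
    hence "int (count_le r h) \<le> int (count_lt w h)"
      using bound[of h] lg n unfolding excess_def g w' by (simp add: count_le_append count_lt_Cons)
    thus ?thesis using vh unfolding excess_def by (simp add: count_le_Cons)
  qed
  have at_v: "?e v = 1"
    using count_le_none[of r v] count_lt_none[of w v] rv wv unfolding excess_def
    by (force simp: count_le_Cons)
  have below_v: "?e h = 0" if "h < v" for h
    using count_le_none[of r h] count_lt_none[of w h] rv wv that unfolding excess_def
    by (force simp: count_le_Cons)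
  show "max_excess (tl w') (v # r) = 1"
    using max_excess_eqI[of w "v # r" v] le1 at_v unfolding w_def by simp
  show "first_peak (tl w') (v # r) = v"
    using first_peak_eqI[of w "v # r" v] le1 at_v below_v unfolding w_def by simp
qed

lemma peak_below_threshold:
  assumes sz: "sorted z" and pos: "\<forall>a\<in>set z. 1 \<le> a" and M: "0 < max_excess w z"
    and below: "\<exists>a\<in>set z. a < h0"
    and above: "\<forall>b\<in>set (remove1 (first_peak w z) z). h0 \<le> b"
  defines "v \<equiv> first_peak w z" and "r \<equiv> remove1 (first_peak w z) z"
  shows "z = v # r" and "v < h0" and "\<forall>a\<in>set w. v \<le> a" and "max_excess w z = 1"
proof -
  have vz: "v \<in> set z" unfolding v_def by (rule first_peak_mem[OF pos M])
  have rh: "\<forall>b\<in>set r. h0 \<le> b" using above unfolding r_def .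
  obtain a where a: "a \<in> set z" "a < h0" using below by blast
  show vh: "v < h0"
  proof (cases "a = v")
    case False
    hence "a \<in> set r" using a unfolding r_def v_def[symmetric] by simp
    thus ?thesis using rh a by force
  qed (use a in simp)
  have rv: "\<forall>b\<in>set r. v < b" using rh vh by force
  show z: "z = v # r"
    using insort_remove1[OF vz sz] rv unfolding r_def v_def[symmetric]
    by (simp add: insort_is_Cons less_imp_le)
  have "count_le r v = 0" using rv by (intro count_le_none) blast
  hence "excess w z v = 1 - int (count_lt w v)"
    unfolding excess_def by (subst z) (simp add: count_le_Cons)
  hence "max_excess w z = 1 - int (count_lt w v)" unfolding max_excess_def v_def .
  thus "max_excess w z = 1" and "\<forall>a\<in>set w. v \<le> a"
    using M by (simp_all add: count_lt_eq_0_iff)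
qed

lemma merge_rows:
  assumes sw: "sorted w" and sz: "sorted z" and sy: "sorted y" and pos: "\<forall>a\<in>set z. 1 \<le> a"
    and len: "length z \<le> length w" and yne: "y \<noteq> []" and M: "0 < max_excess w z"
    and below: "\<exists>a\<in>set z. a < last y"
    and above: "\<forall>b\<in>set (remove1 (first_peak w z) z). last y \<le> b"
  defines "v \<equiv> first_peak w z" and "r \<equiv> remove1 (first_peak w z) z"
  shows "sorted (y @ r)" and "compatible (length z) (v # w) (y @ r)"
proof -
  note shape = peak_below_threshold[OF sz pos M below above, folded v_def r_def]
  have ry: "\<forall>b\<in>set r. last y \<le> b" using above unfolding r_def .
  show syr: "sorted (y @ r)"
    using sy sz ry sorted_le_last[OF sy] unfolding shape(1) by (force simp: sorted_append)
  have bound: "excess (v # w) (y @ r) h \<le> int (length (y @ r)) - int (length z)" for h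
  proof (cases "h < last y")
    case True
    have "count_le r h = 0" using ry True by (intro count_le_none) force
    moreover have "count_le y h < length y" using True yne by (intro count_le_less_length) auto
    ultimately show ?thesis unfolding excess_def shape(1)
      by (simp add: count_le_append count_lt_Cons)
  next
    case False
    hence vh: "v < h" using shape(2) by simp
    have "excess w z h \<le> 1" using excess_le_max[of w z h] shape(4) by simp
    hence "int (count_le r h) \<le> int (count_lt w h)" using vh unfolding excess_def shape(1)
      by (simp add: count_le_Cons)
    thus ?thesis using count_le_le_length[of y h] vh unfolding excess_def shape(1)
      by (simp add: count_le_append count_lt_Cons)
  qed
  have "sorted (v # w)" using sw shape(3) by simp
  moreover have "length z \<le> length (v # w)" "length z \<le> length (y @ r)"
    using len yne unfolding shape(1) by (auto simp: Suc_le_eq)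
  ultimately show "compatible (length z) (v # w) (y @ r)"
    using compatible_iff_excess[OF _ syr] bound by blast
qed

section \<open>Row tableaux cut at a pair of middle rows\<close>

(* A row tableau of shape (sigma, a1, a2, tau | sigmab, b, taub) is a quadruple: the rows S of
   shape sigma, the distinguished rows w (length a1) above z (length a2), and the rows Ts of
   shape tau. *)
type_synonym split_rows = "nat list list \<times> nat list \<times> nat list \<times> nat list list"

definition upper_rows_ok :: "nat list \<Rightarrow> nat list \<Rightarrow> nat list list \<Rightarrow> nat list \<Rightarrow> bool" where
  "upper_rows_ok \<sigma> \<sigma>b S w \<longleftrightarrow> (\<forall>i<length \<sigma>. row_word (\<sigma>!i) (S!i)) \<and>
     (\<forall>i<length \<sigma>. compatible (\<sigma>b!i) (S!i) ((S@[w])!Suc i))"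

definition lower_rows_ok :: "nat list \<Rightarrow> nat list \<Rightarrow> nat list \<Rightarrow> nat list list \<Rightarrow> bool" where
  "lower_rows_ok \<tau> \<tau>b z Ts \<longleftrightarrow> (\<forall>j<length \<tau>. row_word (\<tau>!j) (Ts!j)) \<and>
     (\<forall>j<length \<tau>. compatible (\<tau>b!j) ((z#Ts)!j) (Ts!j))"

definition split_tableaux :: "nat list \<Rightarrow> nat list \<Rightarrow> nat list \<Rightarrow> nat list \<Rightarrow> nat \<Rightarrow> nat \<Rightarrow> nat
    \<Rightarrow> (nat \<Rightarrow> nat) \<Rightarrow> split_rows set" where
  "split_tableaux \<sigma> \<sigma>b \<tau> \<tau>b a1 a2 b c = {(S,w,z,Ts). length S = length \<sigma> \<and> length Ts = length \<tau> \<and>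
      upper_rows_ok \<sigma> \<sigma>b S w \<and> row_word a1 w \<and> compatible b w z \<and> row_word a2 z \<and>
      lower_rows_ok \<tau> \<tau>b z Ts \<and> word_content (S@[w,z]@Ts) = c}"

lemma all_less_split_two:
  "(\<forall>i<s+2+t. P i) \<longleftrightarrow> (\<forall>i<s. P i) \<and> P s \<and> P (Suc s) \<and> (\<forall>j<t. P (Suc (Suc (s+j))))"
proof
  assume "\<forall>i<s+2+t. P i" thus "(\<forall>i<s. P i) \<and> P s \<and> P (Suc s) \<and> (\<forall>j<t. P (Suc (Suc (s+j))))"
    by auto
next
  assume a: "(\<forall>i<s. P i) \<and> P s \<and> P (Suc s) \<and> (\<forall>j<t. P (Suc (Suc (s+j))))"
  show "\<forall>i<s+2+t. P i"
  proof (intro allI impI)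
    fix i assume i: "i < s+2+t"
    consider "i < s" | "i = s" | "i = Suc s" | "Suc (Suc s) \<le> i" by linarith
    thus "P i"
    proof cases
      case 4
      hence "i = Suc (Suc (s + (i - Suc (Suc s))))" "i - Suc (Suc s) < t" using i by auto
      thus ?thesis using a by metis
    qed (use a in auto)
  qed
qed

lemma all_less_split_one:
  "(\<forall>i<s+1+t. P i) \<longleftrightarrow> (\<forall>i<s. P i) \<and> P s \<and> (\<forall>j<t. P (Suc (s+j)))"
proof
  assume "\<forall>i<s+1+t. P i" thus "(\<forall>i<s. P i) \<and> P s \<and> (\<forall>j<t. P (Suc (s+j)))" by auto
next
  assume a: "(\<forall>i<s. P i) \<and> P s \<and> (\<forall>j<t. P (Suc (s+j)))"
  show "\<forall>i<s+1+t. P i"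
  proof (intro allI impI)
    fix i assume i: "i < s+1+t"
    consider "i < s" | "i = s" | "Suc s \<le> i" by linarith
    thus "P i"
    proof cases
      case 3
      hence "i = Suc (s + (i - Suc s))" "i - Suc s < t" using i by auto
      thus ?thesis using a by metis
    qed (use a in auto)
  qed
qed

lemma row_tableau_split:
  assumes l1: "length \<sigma>b = length \<sigma>" and l2: "length \<tau>b = length \<tau>"
    and l3: "length S = length \<sigma>" and l4: "length Ts = length \<tau>"
  shows "row_tableau (\<sigma>@[a1,a2]@\<tau>) (\<sigma>b@[b]@\<tau>b) (S@[w,z]@Ts) \<longleftrightarrow>
         upper_rows_ok \<sigma> \<sigma>b S w \<and> row_word a1 w \<and> compatible b w z \<and> row_word a2 z \<and>
         lower_rows_ok \<tau> \<tau>b z Ts"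
proof -
  let ?s = "length \<sigma>" and ?t = "length \<tau>" and ?W = "S@[w,z]@Ts"
  have la: "length (\<sigma>@[a1,a2]@\<tau>) = ?s + 2 + ?t" by simp
  have lb: "length (\<sigma>b@[b]@\<tau>b) = ?s + 1 + ?t" using l1 l2 by simp
  have rows: "(\<forall>i<length (\<sigma>@[a1,a2]@\<tau>). row_word ((\<sigma>@[a1,a2]@\<tau>)!i) (?W!i)) \<longleftrightarrow>
      (\<forall>i<?s. row_word (\<sigma>!i) (S!i)) \<and> row_word a1 w \<and> row_word a2 z \<and> (\<forall>j<?t. row_word (\<tau>!j) (Ts!j))"
    unfolding la all_less_split_two using l3 by (simp add: nth_append)
  have e1: "?W!Suc i = (S@[w])!Suc i" if "i < ?s" for i
    using that l3 by (cases "Suc i < ?s") (auto simp: nth_append)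
  have e2: "?W!Suc (?s+j) = (z#Ts)!j" "?W!Suc (Suc (?s+j)) = Ts!j" for j
    using l3 by (simp_all add: nth_append)
  have cols: "(\<forall>i<length (\<sigma>b@[b]@\<tau>b). compatible ((\<sigma>b@[b]@\<tau>b)!i) (?W!i) (?W!Suc i)) \<longleftrightarrow>
      (\<forall>i<?s. compatible (\<sigma>b!i) (S!i) ((S@[w])!Suc i)) \<and> compatible b w z \<and>
      (\<forall>j<?t. compatible (\<tau>b!j) ((z#Ts)!j) (Ts!j))"
    unfolding lb all_less_split_one using l1 l3 e1 e2 by (simp add: nth_append)
  show ?thesis unfolding row_tableau_def upper_rows_ok_def lower_rows_ok_def rows cols
    using l3 l4 by auto
qed

lemma split_list_at_pair:
  assumes "length W = s + 2 + t"
  shows "W = take s W @ [W!s, W!Suc s] @ drop (Suc (Suc s)) W"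
  using assms by (simp add: id_take_nth_drop Cons_nth_drop_Suc)

(* Cutting a row tableau around its distinguished pair of rows is a bijection onto the
   quadruples, so both sets have the same (finite) cardinality. *)
lemma card_split_tableaux:
  assumes l1: "length \<sigma>b = length \<sigma>" and l2: "length \<tau>b = length \<tau>"
  shows "card {W. row_tableau (\<sigma>@[a1,a2]@\<tau>) (\<sigma>b@[b]@\<tau>b) W \<and> word_content W = c}
           = card (split_tableaux \<sigma> \<sigma>b \<tau> \<tau>b a1 a2 b c)"
    and "finite (split_tableaux \<sigma> \<sigma>b \<tau> \<tau>b a1 a2 b c)"
proof -
  let ?g = "\<lambda>(S::nat list list,w::nat list,z::nat list,Ts::nat list list). S@[w,z]@Ts"
  let ?T = "split_tableaux \<sigma> \<sigma>b \<tau> \<tau>b a1 a2 b c"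
  let ?W = "{W. row_tableau (\<sigma>@[a1,a2]@\<tau>) (\<sigma>b@[b]@\<tau>b) W \<and> word_content W = c}"
  have inj: "inj_on ?g ?T"
  proof (rule inj_onI)
    fix p q assume p: "p \<in> ?T" and q: "q \<in> ?T" and e: "?g p = ?g q"
    obtain S w z Ts S' w' z' Ts' where pq: "p = (S,w,z,Ts)" "q = (S',w',z',Ts')"
      by (cases p, cases q) auto
    have "length S = length S'" using p q pq unfolding split_tableaux_def by simp
    thus "p = q" using e pq by simp
  qed
  have img: "?g ` ?T = ?W"
  proof
    show "?g ` ?T \<subseteq> ?W"
      using row_tableau_split[OF l1 l2] unfolding split_tableaux_def by auto
  next
    show "?W \<subseteq> ?g ` ?T"
    proof
      fix W assume W: "W \<in> ?W"
      hence len: "length W = length \<sigma> + 2 + length \<tau>" unfolding row_tableau_def by simp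
      define S where "S = take (length \<sigma>) W"
      define Ts where "Ts = drop (Suc (Suc (length \<sigma>))) W"
      have e: "W = S@[W!length \<sigma>, W!Suc (length \<sigma>)]@Ts"
        unfolding S_def Ts_def by (rule split_list_at_pair[OF len])
      have ls: "length S = length \<sigma>" "length Ts = length \<tau>" unfolding S_def Ts_def using len by auto
      have "(S, W!length \<sigma>, W!Suc (length \<sigma>), Ts) \<in> ?T"
        using W row_tableau_split[OF l1 l2 ls] e ls unfolding split_tableaux_def
        by (metis (mono_tags, lifting) case_prodI mem_Collect_eq)
      thus "W \<in> ?g ` ?T"
        using e by (auto intro!: image_eqI[where x="(S, W!length \<sigma>, W!Suc (length \<sigma>), Ts)"])
    qed
  qed
  show "card ?W = card ?T" using card_image[OF inj] img by simp
  show "finite ?T" using finite_image_iff[OF inj] img finite_row_tableaux by simp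
qed

lemma skew_schur_split:
  assumes "length \<sigma>b = length \<sigma>" "length \<tau>b = length \<tau>"
    and "overlap_valid (\<sigma>@[a1,a2]@\<tau>) (\<sigma>b@[b]@\<tau>b)"
  shows "skew_schur (\<sigma>@[a1,a2]@\<tau>) (\<sigma>b@[b]@\<tau>b) c = int (card (split_tableaux \<sigma> \<sigma>b \<tau> \<tau>b a1 a2 b c))"
  using skew_schur_eq_card_row_tableaux[OF assms(3)] card_split_tableaux(1)[OF assms(1,2)] by simp

lemma overlap_valid_split:
  assumes l1: "length \<sigma>b = length \<sigma>" and l2: "length \<tau>b = length \<tau>"
    and vs: "\<forall>i. Suc i < length \<sigma> \<longrightarrow> \<sigma>b!i \<le> min (\<sigma>!i) (\<sigma>!Suc i)"
    and vl: "\<sigma> \<noteq> [] \<longrightarrow> last \<sigma>b \<le> last \<sigma> \<and> last \<sigma>b \<le> a1"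
    and vb: "b \<le> a1" "b \<le> a2"
    and vh: "\<tau> \<noteq> [] \<longrightarrow> hd \<tau>b \<le> a2 \<and> hd \<tau>b \<le> hd \<tau>"
    and vt: "\<forall>j. Suc j < length \<tau> \<longrightarrow> \<tau>b!Suc j \<le> min (\<tau>!j) (\<tau>!Suc j)"
  shows "overlap_valid (\<sigma>@[a1,a2]@\<tau>) (\<sigma>b@[b]@\<tau>b)"
proof -
  let ?s = "length \<sigma>" and ?t = "length \<tau>"
  let ?\<alpha> = "\<sigma>@[a1,a2]@\<tau>" and ?\<beta> = "\<sigma>b@[b]@\<tau>b"
  have lb: "length ?\<beta> = ?s + 1 + ?t" using l1 l2 by simp
  have upper: "?\<beta>!i \<le> min (?\<alpha>!i) (?\<alpha>!Suc i)" if i: "i < ?s" for i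
  proof (cases "Suc i < ?s")
    case True thus ?thesis using vs i l1 by (simp add: nth_append)
  next
    case False
    hence ii: "i = ?s - 1" using i by simp
    have ne: "\<sigma> \<noteq> []" "\<sigma>b \<noteq> []" using i l1 by auto
    have "last \<sigma>b = \<sigma>b!i" "last \<sigma> = \<sigma>!i" "?\<alpha>!Suc i = a1"
      using ii ne l1 by (simp_all add: last_conv_nth nth_append)
    thus ?thesis using vl ne i l1 by (simp add: nth_append)
  qed
  have lower: "?\<beta>!Suc (?s + j) \<le> min (?\<alpha>!Suc (?s + j)) (?\<alpha>!Suc (Suc (?s + j)))" if j: "j < ?t" for j
  proof (cases j)
    case 0
    have "\<tau> \<noteq> []" "\<tau>b \<noteq> []" using j l2 by auto
    thus ?thesis using vh 0 l1 by (simp add: nth_append hd_conv_nth)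
  next
    case (Suc k)
    thus ?thesis using vt j l1 by (simp add: nth_append)
  qed
  have "\<forall>i<length ?\<beta>. ?\<beta>!i \<le> min (?\<alpha>!i) (?\<alpha>!Suc i)"
    unfolding lb all_less_split_one using upper lower vb l1 by (simp add: nth_append)
  thus ?thesis unfolding overlap_valid_def using lb by simp
qed

(* Sharing a single column only compares the first letter of the upper row with the last
   letter of the lower row. *)
lemma compatible_one_above:
  assumes "sorted w" "w \<noteq> []"
  shows "compatible 1 u w \<longleftrightarrow> (\<exists>a\<in>set w. u!0 < a)"
proof -
  have "w!(length w - 1) = last w" using assms(2) by (simp add: last_conv_nth)
  thus ?thesis using assms sorted_le_last[OF assms(1)] unfolding compatible_def
    by (auto intro: less_le_trans)
qed

lemma compatible_one_below:
  assumes "sorted z" "z \<noteq> []"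
  shows "compatible 1 z y \<longleftrightarrow> (\<exists>a\<in>set z. a < y!(length y - 1))"
proof -
  have "z!0 \<le> a" if "a \<in> set z" for a
    using that assms sorted_nth_mono[OF assms(1), of 0] by (auto simp: in_set_conv_nth)
  thus ?thesis using assms unfolding compatible_def by (auto intro: le_less_trans)
qed

(* When the last overlap above w is 1, the rows above w only care about whether w has a letter
   exceeding a given value; so w may be replaced by any w' having such letters as well. *)
lemma upper_rows_ok_change_top:
  assumes l1: "length \<sigma>b = length \<sigma>" and l3: "length S = length \<sigma>"
    and lst: "\<sigma> \<noteq> [] \<longrightarrow> last \<sigma>b = 1" and P: "upper_rows_ok \<sigma> \<sigma>b S w"
    and sw: "sorted w" "w \<noteq> []" and sw': "sorted w'" "w' \<noteq> []"
    and tr: "\<And>u. \<exists>a\<in>set w. u < a \<Longrightarrow> \<exists>a\<in>set w'. u < a"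
  shows "upper_rows_ok \<sigma> \<sigma>b S w'"
  unfolding upper_rows_ok_def
proof (intro conjI allI impI)
  fix i assume i: "i < length \<sigma>"
  show "row_word (\<sigma>!i) (S!i)" using P i unfolding upper_rows_ok_def by blast
  have C: "compatible (\<sigma>b!i) (S!i) ((S@[w])!Suc i)" using P i unfolding upper_rows_ok_def by blast
  show "compatible (\<sigma>b!i) (S!i) ((S@[w'])!Suc i)"
  proof (cases "Suc i < length \<sigma>")
    case True thus ?thesis using C l3 by (simp add: nth_append)
  next
    case False
    hence "i = length \<sigma> - 1" "\<sigma> \<noteq> []" using i by auto
    moreover have "\<sigma>b \<noteq> []" using l1 \<open>\<sigma> \<noteq> []\<close> by auto
    ultimately have "\<sigma>b!i = 1" "(S@[w])!Suc i = w" "(S@[w'])!Suc i = w'"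
      using lst l1 l3 by (auto simp: last_conv_nth nth_append)
    thus ?thesis using C tr compatible_one_above[OF sw] compatible_one_above[OF sw'] by simp
  qed
qed

lemma lower_rows_ok_Cons:
  "lower_rows_ok (a#\<tau>) (b#\<tau>b) z (y#Ts) \<longleftrightarrow>
     row_word a y \<and> compatible b z y \<and> lower_rows_ok \<tau> \<tau>b y Ts"
  unfolding lower_rows_ok_def by (auto simp: less_Suc_eq_0_disj)

lemma lower_rows_ok_change_bottom:
  assumes l2: "length \<tau>b = length \<tau>" and l4: "length Ts = length \<tau>"
    and hd1: "\<tau> \<noteq> [] \<longrightarrow> hd \<tau>b = 1" and hdp: "\<tau> \<noteq> [] \<longrightarrow> 1 \<le> hd \<tau>"
    and L: "lower_rows_ok \<tau> \<tau>b z Ts" and sz': "sorted z'" "z' \<noteq> []"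
  shows "lower_rows_ok \<tau> \<tau>b z' Ts \<longleftrightarrow> (\<tau> \<noteq> [] \<longrightarrow> (\<exists>a\<in>set z'. a < last (hd Ts)))"
proof (cases \<tau>)
  case Nil thus ?thesis using l4 unfolding lower_rows_ok_def by simp
next
  case (Cons a \<tau>')
  obtain \<tau>b' where \<tau>b: "\<tau>b = 1 # \<tau>b'" using l2 hd1 Cons by (cases \<tau>b) auto
  obtain y Ts' where Ts: "Ts = y # Ts'" using l4 Cons by (cases Ts) auto
  have "row_word a y" and rest: "lower_rows_ok \<tau>' \<tau>b' y Ts'"
    using L unfolding Cons \<tau>b Ts lower_rows_ok_Cons by blast+
  hence "y \<noteq> []" using hdp Cons unfolding row_word_def by auto
  thus ?thesis using rest \<open>row_word a y\<close> compatible_one_below[OF sz']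
    unfolding Cons \<tau>b Ts lower_rows_ok_Cons by (simp add: last_conv_nth)
qed

(* The first lower row only sees the first hd taub letters of the row above it. *)
lemma lower_rows_ok_append:
  assumes "\<tau> \<noteq> [] \<longrightarrow> hd \<tau>b \<le> length y" "length \<tau>b = length \<tau>"
  shows "lower_rows_ok \<tau> \<tau>b (y@r) Ts \<longleftrightarrow> lower_rows_ok \<tau> \<tau>b y Ts"
proof (cases \<tau>)
  case Nil thus ?thesis unfolding lower_rows_ok_def by simp
next
  case (Cons a \<tau>')
  obtain b \<tau>b' where tb: "\<tau>b = b # \<tau>b'" using assms(2) Cons by (cases \<tau>b) auto
  have "compatible b (y@r) (Ts!0) \<longleftrightarrow> compatible b y (Ts!0)"
    using assms(1) Cons tb unfolding compatible_def by (auto simp: nth_append)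
  thus ?thesis unfolding lower_rows_ok_def Cons tb by (auto simp: less_Suc_eq_0_disj)
qed

lemma word_content_cong: "mset (concat W) = mset (concat W') \<Longrightarrow> word_content W = word_content W'"
  unfolding word_content_def by simp

lemma row_words_compatible_iff:
  assumes "row_word a1 w" "row_word a2 z" "b \<le> a1" "b \<le> a2"
  shows "compatible b w z \<longleftrightarrow> max_excess w z \<le> int a2 - int b"
  using compatible_iff_max_excess[of w z b] assms unfolding row_word_def by simp

(* Two-row form of the inverse map: dropping the last peak letter of an (m + 1, k) pair that
   is compatible along x columns gives an (m, k + 1) pair that is still compatible along x
   columns but no longer along k + 1, with the dropped letter as its first peak. *)
lemma drop_peak_rows:
  assumes w': "row_word (Suc m) w'" and z': "row_word k z'" and C: "compatible x w' z'"
    and "x \<le> k" "k < m"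
  defines "p \<equiv> last_peak w' z'"
  shows "p \<in> set w'" and "row_word m (remove1 p w')" and "row_word (Suc k) (insort p z')"
    and "compatible x (remove1 p w') (insort p z')"
    and "\<not> compatible (Suc k) (remove1 p w') (insort p z')"
    and "first_peak (remove1 p w') (insort p z') = p"
    and "\<exists>b\<in>set (remove1 p w'). p \<le> b"
proof -
  have pos: "\<forall>a\<in>set z'. 1 \<le> a" and len: "length z' < length w'"
    using z' w' assms(4,5) unfolding row_word_def by auto
  note drop = drop_last_peak[OF pos len, folded p_def]
  show pw: "p \<in> set w'" by (fact drop(1))
  show "first_peak (remove1 p w') (insort p z') = p" by (fact drop(3))
  show "\<exists>b\<in>set (remove1 p w'). p \<le> b"
    unfolding p_def using drop_last_peak_keeps_large[OF pos] z' w' assms(5)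
    unfolding row_word_def by simp
  show w: "row_word m (remove1 p w')" and z: "row_word (Suc k) (insort p z')"
    using w' z' pw unfolding row_word_def by (auto simp: length_remove1 sorted_remove1 sorted_insort
        set_insort_key dest: notin_set_remove1[THEN contrapos_nn] set_remove1_subset[THEN subsetD])
  have "max_excess w' z' \<le> int k - int x" using row_words_compatible_iff[OF w' z'] C assms(4,5) by simp
  thus "compatible x (remove1 p w') (insort p z')"
    using row_words_compatible_iff[OF w z] drop(2) assms(4,5) by simp
  show "\<not> compatible (Suc k) (remove1 p w') (insort p z')"
    using row_words_compatible_iff[OF w z] drop(2) max_excess_nonneg[OF pos, of w'] assms(5) by simp
qed

(* Two-row form of the main map: in an (m, n) pair compatible along x but not along n
   columns, lifting the first peak letter gives an (m + 1, n - 1) pair compatible along x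
   columns, with the lifted letter as its last peak. *)
lemma lift_peak_rows:
  assumes w: "row_word m w" and z: "row_word n z" and Cx: "compatible x w z"
    and Cn: "\<not> compatible n w z" and "x < n" "n \<le> m"
  defines "p \<equiv> first_peak w z"
  shows "p \<in> set z" and "row_word (Suc m) (insort p w)" and "row_word (n - 1) (remove1 p z)"
    and "compatible x (insort p w) (remove1 p z)"
    and "last_peak (insort p w) (remove1 p z) = p"
proof -
  have pos: "\<forall>a\<in>set z. 1 \<le> a" and len: "length z \<le> Suc (length w)"
    using z w assms(6) unfolding row_word_def by auto
  have M: "0 < max_excess w z" using row_words_compatible_iff[OF w z] Cn assms(6) by simp
  note lift = lift_first_peak[OF pos M len, folded p_def]
  show pz: "p \<in> set z" by (fact lift(1))
  show "last_peak (insort p w) (remove1 p z) = p" by (fact lift(3))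
  show w': "row_word (Suc m) (insort p w)" and z': "row_word (n - 1) (remove1 p z)"
    using w z pz unfolding row_word_def by (auto simp: length_remove1 sorted_remove1 sorted_insort
        set_insort_key dest: notin_set_remove1[THEN contrapos_nn] set_remove1_subset[THEN subsetD])
  have "max_excess w z \<le> int n - int x" using row_words_compatible_iff[OF w z] Cx assms(5,6) by simp
  thus "compatible x (insort p w) (remove1 p z)"
    using row_words_compatible_iff[OF w' z'] lift(2) assms(5,6) by simp
qed

section \<open>The bijections under the Standing Hypothesis\<close>

definition lift_peak :: "split_rows \<Rightarrow> split_rows" where
  "lift_peak t = (case t of (S,w,z,Ts) \<Rightarrow>
     (S, insort (first_peak w z) w, remove1 (first_peak w z) z, Ts))"

definition drop_peak :: "split_rows \<Rightarrow> split_rows" where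
  "drop_peak t = (case t of (S,w,z,Ts) \<Rightarrow>
     (S, remove1 (last_peak w z) w, insort (last_peak w z) z, Ts))"

definition merge_first_lower :: "split_rows \<Rightarrow> split_rows" where
  "merge_first_lower t = (case t of (S,w,z,Ts) \<Rightarrow>
     (S, insort (first_peak w z) w, hd Ts @ remove1 (first_peak w z) z, tl Ts))"

definition split_first_lower :: "nat \<Rightarrow> split_rows \<Rightarrow> split_rows" where
  "split_first_lower p t = (case t of (S,w',g,Ts') \<Rightarrow> (S, tl w', hd w' # drop p g, take p g # Ts'))"

locale standing_hypothesis =
  fixes \<sigma> \<tau> \<sigma>b \<tau>b :: "nat list" and m n x :: nat and c :: "nat \<Rightarrow> nat"
  assumes comp_\<sigma>: "\<forall>a\<in>set \<sigma>. 1 \<le> a" and comp_\<tau>: "\<forall>a\<in>set \<tau>. 1 \<le> a"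
    and len_\<sigma>b: "length \<sigma>b = length \<sigma>" and len_\<tau>b: "length \<tau>b = length \<tau>"
    and last_\<sigma>b: "\<sigma> \<noteq> [] \<longrightarrow> last \<sigma>b = 1" and hd_\<tau>b: "\<tau> \<noteq> [] \<longrightarrow> hd \<tau>b = 1"
    and ov_\<sigma>: "\<forall>i. i + 1 < length \<sigma> \<longrightarrow> \<sigma>b ! i \<le> min (\<sigma> ! i) (\<sigma> ! (i + 1))"
    and ov_\<tau>: "\<forall>i. 0 < i \<and> i < length \<tau> \<longrightarrow> \<tau>b ! i \<le> min (\<tau> ! i) (\<tau> ! (i - 1))"
    and xn: "x < n" and nm: "n \<le> m"
begin

abbreviation "T_x \<equiv> split_tableaux \<sigma> \<sigma>b \<tau> \<tau>b m n x c"
abbreviation "T_n \<equiv> split_tableaux \<sigma> \<sigma>b \<tau> \<tau>b m n n c"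
abbreviation "T_shift \<equiv> split_tableaux \<sigma> \<sigma>b \<tau> \<tau>b (m + 1) (n - 1) x c"
abbreviation "T_merge \<equiv> split_tableaux \<sigma> \<sigma>b (tl \<tau>) (tl \<tau>b) (m + 1) (n - 1 + hd \<tau>) n c"

definition stuck :: "split_rows set" where
  "stuck = {(S,w,z,Ts). (S,w,z,Ts) \<in> T_x \<and> \<not> compatible n w z \<and> \<tau> \<noteq> [] \<and>
      (\<forall>b\<in>set (remove1 (first_peak w z) z). last (hd Ts) \<le> b)}"

lemma upper_rows_top:
  assumes "length S = length \<sigma>" "upper_rows_ok \<sigma> \<sigma>b S w" "sorted w" "w \<noteq> []" "sorted w'" "w' \<noteq> []"
    "\<And>u. \<exists>a\<in>set w. u < a \<Longrightarrow> \<exists>a\<in>set w'. u < a"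
  shows "upper_rows_ok \<sigma> \<sigma>b S w'"
  using upper_rows_ok_change_top[OF len_\<sigma>b assms(1) last_\<sigma>b assms(2-)] by blast

lemma lower_rows_bottom:
  assumes "length Ts = length \<tau>" "lower_rows_ok \<tau> \<tau>b z Ts" "sorted z'" "z' \<noteq> []"
  shows "lower_rows_ok \<tau> \<tau>b z' Ts \<longleftrightarrow> (\<tau> \<noteq> [] \<longrightarrow> (\<exists>a\<in>set z'. a < last (hd Ts)))"
  by (rule lower_rows_ok_change_bottom[OF len_\<tau>b assms(1) hd_\<tau>b _ assms(2-)])
    (use comp_\<tau> in \<open>cases \<tau>, auto\<close>)

lemma Tn_subset_Tx: "T_n \<subseteq> T_x"
proof
  fix t assume t: "t \<in> T_n"
  obtain S w z Ts where tt: "t = (S,w,z,Ts)" by (cases t) auto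
  have rows: "row_word m w" "row_word n z" and "compatible n w z"
    using t unfolding tt split_tableaux_def by auto
  hence "compatible x w z" using row_words_compatible_iff[OF rows] xn nm by simp
  thus "t \<in> T_x" using t unfolding tt split_tableaux_def by auto
qed

(* Dropping the last peak letter maps T_shift into T_x, outside T_n and outside stuck, and is
   undone by lifting the first peak letter.  (If n = 1 the rows below z would have to sit
   under an empty row, which is excluded by assuming tau = [] in that case.) *)
lemma drop_peak_in_Tx:
  assumes shift: "2 \<le> n \<or> \<tau> = []" and t: "(S,w',z',Ts) \<in> T_shift"
  shows "drop_peak (S,w',z',Ts) \<in> T_x - T_n - stuck"
    and "lift_peak (drop_peak (S,w',z',Ts)) = (S,w',z',Ts)"
proof -
  have rw': "row_word (Suc m) w'" and rz': "row_word (n - 1) z'" and Cx: "compatible x w' z'"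
    and lS: "length S = length \<sigma>" and lTs: "length Ts = length \<tau>" and U: "upper_rows_ok \<sigma> \<sigma>b S w'"
    and L: "lower_rows_ok \<tau> \<tau>b z' Ts" and cont: "word_content (S@[w',z']@Ts) = c"
    using t unfolding split_tableaux_def by auto
  define p where "p = last_peak w' z'"
  define w z where "w = remove1 p w'" and "z = insort p z'"
  have n1: "Suc (n - 1) = n" using xn by simp
  have xk: "x \<le> n - 1" "n - 1 < m" using xn nm by auto
  have rw: "row_word m w" and rz: "row_word n z" and pw': "p \<in> set w'"
    and C: "compatible x w z" "\<not> compatible n w z" and fp: "first_peak w z = p"
    and large: "\<exists>b\<in>set w. p \<le> b"
    using drop_peak_rows[OF rw' rz' Cx xk] n1 unfolding p_def w_def z_def by auto
  have sw': "sorted w'" "w' \<noteq> []" "sorted w" "w \<noteq> []" and sz: "sorted z'" "sorted z" "z \<noteq> []"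
    using rw' rw rz' rz nm xn unfolding row_word_def z_def by auto
  have "upper_rows_ok \<sigma> \<sigma>b S w"
  proof (rule upper_rows_top[OF lS U sw'])
    fix u assume "\<exists>a\<in>set w'. u < a"
    then obtain a where a: "a \<in> set w'" "u < a" by blast
    show "\<exists>a\<in>set w. u < a"
      using a large unfolding w_def by (cases "a = p") (auto intro: less_le_trans)
  qed
  moreover have below: "\<exists>a\<in>set z'. a < last (hd Ts)" if "\<tau> \<noteq> []"
  proof -
    have "z' \<noteq> []" using that shift rz' unfolding row_word_def by auto
    thus ?thesis using lower_rows_bottom[OF lTs L sz(1)] L that by blast
  qed
  hence "lower_rows_ok \<tau> \<tau>b z Ts"
    using lower_rows_bottom[OF lTs L sz(2,3)] unfolding z_def by (auto simp: set_insort_key)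
  moreover have "word_content (S@[w,z]@Ts) = c"
    using cont pw' unfolding w_def z_def by (subst (asm) word_content_cong) simp_all
  ultimately have inTx: "(S,w,z,Ts) \<in> T_x" using lS lTs rw rz C unfolding split_tableaux_def by simp
  have "remove1 p z = z'" unfolding z_def by simp
  hence "(S,w,z,Ts) \<notin> stuck" using below fp unfolding stuck_def by (auto simp: not_le)
  moreover have dp: "drop_peak (S,w',z',Ts) = (S,w,z,Ts)"
    unfolding drop_peak_def p_def w_def z_def by simp
  ultimately show "drop_peak (S,w',z',Ts) \<in> T_x - T_n - stuck"
    using inTx C(2) unfolding split_tableaux_def by auto
  show "lift_peak (drop_peak (S,w',z',Ts)) = (S,w',z',Ts)"
    unfolding dp lift_peak_def using fp insort_remove1[OF pw' sw'(1)] unfolding w_def z_def by simp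
qed

(* Conversely, lifting the first peak letter maps T_x - T_n - stuck into T_shift and is undone
   by dropping the last peak letter; outside stuck the row z keeps a letter, so n \<ge> 2
   whenever tau is nonempty. *)
lemma lift_peak_in_Tshift:
  assumes t: "(S,w,z,Ts) \<in> T_x - T_n - stuck"
  shows "lift_peak (S,w,z,Ts) \<in> T_shift" and "drop_peak (lift_peak (S,w,z,Ts)) = (S,w,z,Ts)"
    and "\<tau> \<noteq> [] \<Longrightarrow> 2 \<le> n"
proof -
  have rw: "row_word m w" and rz: "row_word n z" and Cx: "compatible x w z"
    and lS: "length S = length \<sigma>" and lTs: "length Ts = length \<tau>" and U: "upper_rows_ok \<sigma> \<sigma>b S w"
    and L: "lower_rows_ok \<tau> \<tau>b z Ts" and cont: "word_content (S@[w,z]@Ts) = c"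
    and Cn: "\<not> compatible n w z"
    using t unfolding split_tableaux_def by auto
  define p where "p = first_peak w z"
  define w' z' where "w' = insort p w" and "z' = remove1 p z"
  have pz: "p \<in> set z" and rw': "row_word (Suc m) w'" and rz': "row_word (n - 1) z'"
    and Cx': "compatible x w' z'" and lp: "last_peak w' z' = p"
    using lift_peak_rows[OF rw rz Cx Cn xn nm] unfolding p_def w'_def z'_def by auto
  have below: "\<exists>a\<in>set z'. a < last (hd Ts)" if "\<tau> \<noteq> []"
    using t that Cn unfolding stuck_def z'_def p_def by (auto simp: not_le)
  show "\<tau> \<noteq> [] \<Longrightarrow> 2 \<le> n"
  proof -
    assume "\<tau> \<noteq> []"
    hence "z' \<noteq> []" using below by fastforce
    thus ?thesis using rz' unfolding row_word_def by (cases z') auto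
  qed
  have sw: "sorted w" "w \<noteq> []" "sorted w'" "w' \<noteq> []" and sz: "sorted z" "sorted z'"
    using rw rw' rz rz' xn nm unfolding row_word_def w'_def by auto
  have "upper_rows_ok \<sigma> \<sigma>b S w'"
    by (rule upper_rows_top[OF lS U sw]) (auto simp: w'_def set_insort_key)
  moreover have "lower_rows_ok \<tau> \<tau>b z' Ts"
  proof (cases "\<tau> = []")
    case False
    hence "z' \<noteq> []" using below by auto
    thus ?thesis using lower_rows_bottom[OF lTs L sz(2)] below by blast
  qed (use lTs in \<open>simp add: lower_rows_ok_def\<close>)
  moreover have "word_content (S@[w',z']@Ts) = c"
    using cont pz unfolding w'_def z'_def by (subst (asm) word_content_cong) simp_all
  moreover have lift: "lift_peak (S,w,z,Ts) = (S,w',z',Ts)"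
    unfolding lift_peak_def p_def w'_def z'_def by simp
  ultimately show "lift_peak (S,w,z,Ts) \<in> T_shift"
    using lS lTs rw' rz' Cx' unfolding split_tableaux_def by simp
  show "drop_peak (lift_peak (S,w,z,Ts)) = (S,w,z,Ts)"
    using lp insort_remove1[OF pz sz(1)] unfolding lift drop_peak_def by (simp add: w'_def z'_def)
qed

lemma stuck_subset: "stuck \<subseteq> T_x - T_n"
  unfolding stuck_def split_tableaux_def by auto

lemma Tx_minus_Tn_minus_stuck:
  "T_x - T_n - stuck = (if 2 \<le> n \<or> \<tau> = [] then drop_peak ` T_shift else {})"
proof
  show "T_x - T_n - stuck \<subseteq> (if 2 \<le> n \<or> \<tau> = [] then drop_peak ` T_shift else {})"
  proof
    fix t assume t: "t \<in> T_x - T_n - stuck"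
    obtain S w z Ts where tt: "t = (S,w,z,Ts)" by (cases t) auto
    note lift = lift_peak_in_Tshift[OF t[unfolded tt]]
    have "t \<in> drop_peak ` T_shift" using lift(1,2) tt by (metis image_eqI)
    thus "t \<in> (if 2 \<le> n \<or> \<tau> = [] then drop_peak ` T_shift else {})" using lift(3) by auto
  qed
  show "(if 2 \<le> n \<or> \<tau> = [] then drop_peak ` T_shift else {}) \<subseteq> T_x - T_n - stuck"
    using drop_peak_in_Tx(1) by (auto split: if_splits)
qed

lemma card_Tx: "card T_x = card T_n + card stuck + (if 2 \<le> n \<or> \<tau> = [] then card T_shift else 0)"
proof -
  have fin: "finite T_x" by (rule card_split_tableaux(2)[OF len_\<sigma>b len_\<tau>b])
  have "card T_x = card T_n + card (T_x - T_n)"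
    using card_Diff_subset[OF finite_subset[OF Tn_subset_Tx fin] Tn_subset_Tx]
      card_mono[OF fin Tn_subset_Tx] by simp
  moreover have "card (T_x - T_n) = card stuck + card (T_x - T_n - stuck)"
    using card_Diff_subset[OF finite_subset[OF stuck_subset] stuck_subset]
      card_mono[OF _ stuck_subset] fin by simp
  moreover have "card (drop_peak ` T_shift) = card T_shift" if "2 \<le> n \<or> \<tau> = []"
  proof (rule card_image, rule inj_on_inverseI)
    fix t assume "t \<in> T_shift"
    thus "lift_peak (drop_peak t) = t" using drop_peak_in_Tx(2)[OF that] by (cases t) auto
  qed
  ultimately show ?thesis unfolding Tx_minus_Tn_minus_stuck by auto
qed

lemma lower_rows_ok_first:
  assumes "\<tau> \<noteq> []"
  shows "lower_rows_ok \<tau> \<tau>b z (y # Ts') \<longleftrightarrow>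
           row_word (hd \<tau>) y \<and> compatible 1 z y \<and> lower_rows_ok (tl \<tau>) (tl \<tau>b) y Ts'"
  using assms len_\<tau>b hd_\<tau>b lower_rows_ok_Cons[of "hd \<tau>" "tl \<tau>" "hd \<tau>b" "tl \<tau>b"]
  by (cases \<tau>; cases \<tau>b) auto

(* Appending letters to a full-length first lower row does not affect the rows below it,
   since the second overlap is at most the length of the first lower row. *)
lemma lower_rows_ok_extend_first:
  assumes "\<tau> \<noteq> []" "row_word (hd \<tau>) y"
  shows "lower_rows_ok (tl \<tau>) (tl \<tau>b) (y @ r) Ts' \<longleftrightarrow> lower_rows_ok (tl \<tau>) (tl \<tau>b) y Ts'"
proof (rule lower_rows_ok_append)
  show "length (tl \<tau>b) = length (tl \<tau>)" using len_\<tau>b by simp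
  show "tl \<tau> \<noteq> [] \<longrightarrow> hd (tl \<tau>b) \<le> length y"
  proof
    assume "tl \<tau> \<noteq> []"
    hence l: "1 < length \<tau>" by (cases \<tau>) auto
    hence "hd (tl \<tau>b) = \<tau>b!1" "hd \<tau> = \<tau>!0" using len_\<tau>b
      by (cases \<tau>b; cases "tl \<tau>b"; cases \<tau>; auto)+
    thus "hd (tl \<tau>b) \<le> length y" using ov_\<tau>[rule_format, of 1] l assms(2)
      unfolding row_word_def by simp
  qed
qed

(* A stuck quadruple has z = v # r with v the first peak; lifting v and merging r into the
   first lower row gives an element of T_merge, from which it is recovered by splitting. *)
lemma merge_in_Tmerge:
  assumes "t \<in> stuck"
  shows "merge_first_lower t \<in> T_merge" and "split_first_lower (hd \<tau>) (merge_first_lower t) = t"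
proof -
  obtain S w z Ts where tt: "t = (S,w,z,Ts)" by (cases t)
  note t = assms[unfolded tt]
  have rw: "row_word m w" and rz: "row_word n z" and lS: "length S = length \<sigma>"
    and lTs: "length Ts = length \<tau>" and U: "upper_rows_ok \<sigma> \<sigma>b S w"
    and L: "lower_rows_ok \<tau> \<tau>b z Ts" and cont: "word_content (S@[w,z]@Ts) = c"
    and Cn: "\<not> compatible n w z" and tne: "\<tau> \<noteq> []"
    and above: "\<forall>b\<in>set (remove1 (first_peak w z) z). last (hd Ts) \<le> b"
    using t unfolding stuck_def split_tableaux_def by auto
  obtain y Ts' where Ts: "Ts = y # Ts'" using lTs tne by (cases Ts) auto
  have ry: "row_word (hd \<tau>) y" and C1: "compatible 1 z y"
    and L': "lower_rows_ok (tl \<tau>) (tl \<tau>b) y Ts'"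
    using L unfolding Ts lower_rows_ok_first[OF tne] by auto
  have sw: "sorted w" "w \<noteq> []" using rw xn nm unfolding row_word_def by auto
  have sz: "sorted z" "z \<noteq> []" and pos: "\<forall>a\<in>set z. 1 \<le> a" using rz xn unfolding row_word_def by auto
  have "1 \<le> hd \<tau>" using comp_\<tau> tne by simp
  hence sy: "sorted y" "y \<noteq> []" and ly: "length y = hd \<tau>" using ry unfolding row_word_def by auto
  have M: "0 < max_excess w z" using row_words_compatible_iff[OF rw rz] Cn nm by simp
  have below: "\<exists>a\<in>set z. a < last y"
    using C1 compatible_one_below[OF sz] sy(2) by (simp add: last_conv_nth)
  define v where "v = first_peak w z"
  define r where "r = remove1 v z"
  have above': "\<forall>b\<in>set (remove1 (first_peak w z) z). last y \<le> b" using above Ts by simp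
  have len: "length z \<le> length w" using rw rz nm unfolding row_word_def by simp
  have z: "z = v # r" and wv: "\<forall>a\<in>set w. v \<le> a"
    using peak_below_threshold[OF sz(1) pos M below above'] unfolding v_def r_def by auto
  have syr: "sorted (y @ r)" and C: "compatible (length z) (v # w) (y @ r)"
    using merge_rows[OF sw(1) sz(1) sy(1) pos len sy(2) M below above'] unfolding v_def r_def by auto
  have merge: "merge_first_lower (S,w,z,Ts) = (S, v # w, y @ r, Ts')"
  proof -
    have "insort v w = v # w" using wv by (simp add: insort_is_Cons)
    thus ?thesis unfolding merge_first_lower_def Ts by (simp add: v_def[symmetric] r_def)
  qed
  have "upper_rows_ok \<sigma> \<sigma>b S (v # w)"
    by (rule upper_rows_top[OF lS U sw]) (use wv sw in auto)
  moreover have "row_word (m + 1) (v # w)" and "row_word (n - 1 + hd \<tau>) (y @ r)"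
    using rw rz ry syr wv z unfolding row_word_def by auto
  moreover have "lower_rows_ok (tl \<tau>) (tl \<tau>b) (y @ r) Ts'"
    using lower_rows_ok_extend_first[OF tne ry] L' by blast
  moreover have "word_content (S@[v # w, y @ r]@Ts') = c"
    using cont unfolding Ts z by (subst (asm) word_content_cong) (simp_all add: ac_simps)
  ultimately show "merge_first_lower t \<in> T_merge"
    unfolding tt merge using lS lTs C rz Ts unfolding split_tableaux_def row_word_def by auto
  show "split_first_lower (hd \<tau>) (merge_first_lower t) = t"
    unfolding tt merge split_first_lower_def using ly z Ts by simp
qed

lemma split_in_stuck:
  assumes tne: "\<tau> \<noteq> []" and "t \<in> T_merge"
  shows "split_first_lower (hd \<tau>) t \<in> stuck"
    and "merge_first_lower (split_first_lower (hd \<tau>) t) = t"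
proof -
  obtain S w' g Ts' where tt: "t = (S,w',g,Ts')" by (cases t)
  note t = assms(2)[unfolded tt]
  have rw': "row_word (m + 1) w'" and rg: "row_word (n - 1 + hd \<tau>) g" and Cn: "compatible n w' g"
    and lS: "length S = length \<sigma>" and lTs: "length Ts' = length (tl \<tau>)"
    and U: "upper_rows_ok \<sigma> \<sigma>b S w'" and L': "lower_rows_ok (tl \<tau>) (tl \<tau>b) g Ts'"
    and cont: "word_content (S@[w',g]@Ts') = c"
    using t unfolding split_tableaux_def by auto
  have p1: "1 \<le> hd \<tau>" using comp_\<tau> tne by simp
  define v w y r where "v = hd w'" and "w = tl w'" and "y = take (hd \<tau>) g" and "r = drop (hd \<tau>) g"
  have sw': "sorted w'" and sg: "sorted g" using rw' rg unfolding row_word_def by auto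
  have vy: "v < last y" and ry: "\<forall>b\<in>set r. last y \<le> b"
    and M1: "max_excess w (v # r) = 1" and fp: "first_peak w (v # r) = v"
    using split_merged_row[OF sw' sg _ _ p1 _ Cn] xn nm rw' rg
    unfolding v_def w_def y_def r_def row_word_def by auto
  have w': "w' = v # w" using rw' unfolding v_def w_def row_word_def by (cases w') auto
  have g: "g = y @ r" and ly: "length y = hd \<tau>" using rg p1 unfolding y_def r_def row_word_def by auto
  have yne: "y \<noteq> []" using ly p1 by auto
  have rw: "row_word m w" and rz: "row_word n (v # r)" and ry': "row_word (hd \<tau>) y"
    using rw' rg vy ry ly xn unfolding w' g row_word_def by (auto simp: sorted_append)
  have Cx: "compatible x w (v # r)" and Cn': "\<not> compatible n w (v # r)"
    using row_words_compatible_iff[OF rw rz] M1 xn nm by simp_all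
  have "upper_rows_ok \<sigma> \<sigma>b S w"
  proof (rule upper_rows_top[OF lS U])
    show "sorted w'" "w' \<noteq> []" "sorted w" "w \<noteq> []" using rw' rw xn nm unfolding row_word_def w' by auto
    fix u assume "\<exists>a\<in>set w'. u < a"
    thus "\<exists>a\<in>set w. u < a" using sw' \<open>w \<noteq> []\<close> unfolding w'
      by (auto intro: less_le_trans) (meson less_le_trans list.set_sel(1))
  qed
  moreover have "lower_rows_ok \<tau> \<tau>b (v # r) (y # Ts')"
    unfolding lower_rows_ok_first[OF tne] using ry' L' lower_rows_ok_extend_first[OF tne ry', of r Ts']
      compatible_one_below[of "v # r" y] rz vy yne unfolding g row_word_def by (auto simp: last_conv_nth)
  moreover have "word_content (S@[w, v # r]@(y # Ts')) = c"
    using cont unfolding w' g by (subst (asm) word_content_cong) (simp_all add: ac_simps)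
  ultimately have "(S, w, v # r, y # Ts') \<in> T_x"
    using lS lTs rw rz Cx tne unfolding split_tableaux_def by (cases \<tau>) auto
  moreover have split: "split_first_lower (hd \<tau>) (S,w',g,Ts') = (S, w, v # r, y # Ts')"
    unfolding split_first_lower_def v_def w_def y_def r_def by simp
  ultimately show "split_first_lower (hd \<tau>) t \<in> stuck"
    unfolding tt split stuck_def using Cn' tne fp ry by simp
  have "insort v w = w'" using sw' unfolding w' by (simp add: insort_is_Cons)
  thus "merge_first_lower (split_first_lower (hd \<tau>) t) = t"
    unfolding tt split merge_first_lower_def using fp g by simp
qed

lemma card_stuck: "card stuck = (if \<tau> = [] then 0 else card T_merge)"
proof (cases "\<tau> = []")
  case True
  hence "stuck = {}" unfolding stuck_def by auto
  thus ?thesis using True by simp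
next
  case False
  have "bij_betw merge_first_lower stuck T_merge"
  proof (rule bij_betw_byWitness[where f'="split_first_lower (hd \<tau>)"])
    show "\<forall>t\<in>stuck. split_first_lower (hd \<tau>) (merge_first_lower t) = t"
      using merge_in_Tmerge(2) by fast
    show "\<forall>t\<in>T_merge. merge_first_lower (split_first_lower (hd \<tau>) t) = t"
      using split_in_stuck(2)[OF False] by fast
    show "merge_first_lower ` stuck \<subseteq> T_merge"
      by (rule image_subsetI) (rule merge_in_Tmerge(1))
    show "split_first_lower (hd \<tau>) ` T_merge \<subseteq> stuck"
      by (rule image_subsetI) (rule split_in_stuck(1)[OF False])
  qed
  thus ?thesis using False by (simp add: bij_betw_same_card)
qed

lemma overlap_valid_middle:
  assumes "1 \<le> a1" "b \<le> a1" "b \<le> a2" "\<tau> \<noteq> [] \<longrightarrow> 1 \<le> a2"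
  shows "overlap_valid (\<sigma>@[a1,a2]@\<tau>) (\<sigma>b@[b]@\<tau>b)"
proof (rule overlap_valid_split[OF len_\<sigma>b len_\<tau>b])
  show "\<forall>i. Suc i < length \<sigma> \<longrightarrow> \<sigma>b!i \<le> min (\<sigma>!i) (\<sigma>!Suc i)" using ov_\<sigma> by simp
  show "\<forall>j. Suc j < length \<tau> \<longrightarrow> \<tau>b!Suc j \<le> min (\<tau>!j) (\<tau>!Suc j)"
    using ov_\<tau> by (metis diff_Suc_1 min.commute zero_less_Suc)
  show "\<sigma> \<noteq> [] \<longrightarrow> last \<sigma>b \<le> last \<sigma> \<and> last \<sigma>b \<le> a1" using last_\<sigma>b comp_\<sigma> assms(1) by auto
  show "\<tau> \<noteq> [] \<longrightarrow> hd \<tau>b \<le> a2 \<and> hd \<tau>b \<le> hd \<tau>" using hd_\<tau>b comp_\<tau> assms(4) by auto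
qed (use assms in auto)

lemma overlap_valid_merged:
  assumes "\<tau> \<noteq> []"
  shows "overlap_valid (\<sigma>@[m + 1, n - 1 + hd \<tau>]@tl \<tau>) (\<sigma>b@[n]@tl \<tau>b)"
proof (rule overlap_valid_split[OF len_\<sigma>b])
  show "length (tl \<tau>b) = length (tl \<tau>)" using len_\<tau>b by simp
  show "\<forall>i. Suc i < length \<sigma> \<longrightarrow> \<sigma>b!i \<le> min (\<sigma>!i) (\<sigma>!Suc i)" using ov_\<sigma> by simp
  show "\<forall>j. Suc j < length (tl \<tau>) \<longrightarrow> tl \<tau>b!Suc j \<le> min (tl \<tau>!j) (tl \<tau>!Suc j)"
  proof (intro allI impI)
    fix j assume j: "Suc j < length (tl \<tau>)"
    hence "\<tau>b!Suc (Suc j) \<le> min (\<tau>!Suc (Suc j)) (\<tau>!Suc j)"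
      using ov_\<tau>[rule_format, of "Suc (Suc j)"] by auto
    thus "tl \<tau>b!Suc j \<le> min (tl \<tau>!j) (tl \<tau>!Suc j)" using j len_\<tau>b by (simp add: nth_tl min.commute)
  qed
  show "\<sigma> \<noteq> [] \<longrightarrow> last \<sigma>b \<le> last \<sigma> \<and> last \<sigma>b \<le> m + 1" using last_\<sigma>b comp_\<sigma> by auto
  show "tl \<tau> \<noteq> [] \<longrightarrow> hd (tl \<tau>b) \<le> n - 1 + hd \<tau> \<and> hd (tl \<tau>b) \<le> hd (tl \<tau>)"
  proof
    assume "tl \<tau> \<noteq> []"
    hence l: "1 < length \<tau>" by (cases \<tau>) auto
    hence "hd (tl \<tau>b) = \<tau>b!1" "hd \<tau> = \<tau>!0" "hd (tl \<tau>) = \<tau>!1" using len_\<tau>b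
      by (cases \<tau>b; cases "tl \<tau>b"; cases \<tau>; cases "tl \<tau>"; auto)+
    thus "hd (tl \<tau>b) \<le> n - 1 + hd \<tau> \<and> hd (tl \<tau>b) \<le> hd (tl \<tau>)"
      using ov_\<tau>[rule_format, of 1] l by simp
  qed
qed (use xn nm comp_\<tau> hd_in_set[OF assms] in auto)

lemma skew_schur_x: "skew_schur (\<sigma> @ [m, n] @ \<tau>) (\<sigma>b @ [x] @ \<tau>b) c = int (card T_x)"
  by (rule skew_schur_split[OF len_\<sigma>b len_\<tau>b overlap_valid_middle]) (use xn nm in auto)

lemma skew_schur_n: "skew_schur (\<sigma> @ [m, n] @ \<tau>) (\<sigma>b @ [n] @ \<tau>b) c = int (card T_n)"
  by (rule skew_schur_split[OF len_\<sigma>b len_\<tau>b overlap_valid_middle]) (use xn nm in auto)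

lemma skew_schur_merge:
  "\<tau> \<noteq> [] \<Longrightarrow> skew_schur (\<sigma> @ [m + 1, n - 1 + hd \<tau>] @ tl \<tau>) (\<sigma>b @ [n] @ tl \<tau>b) c = int (card T_merge)"
  using skew_schur_split[OF len_\<sigma>b _ overlap_valid_merged] len_\<tau>b by simp

(* If n = 1 and tau is nonempty, the shifted shape would need the row below an empty row to
   overlap it in hd taub = 1 column, so its skew Schur function is 0 by convention. *)
lemma skew_schur_shift:
  "skew_schur (\<sigma> @ [m + 1, n - 1] @ \<tau>) (\<sigma>b @ [x] @ \<tau>b) c =
     (if 2 \<le> n \<or> \<tau> = [] then int (card T_shift) else 0)"
proof (cases "2 \<le> n \<or> \<tau> = []")
  case True
  have "skew_schur (\<sigma> @ [m + 1, n - 1] @ \<tau>) (\<sigma>b @ [x] @ \<tau>b) c = int (card T_shift)"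
    by (rule skew_schur_split[OF len_\<sigma>b len_\<tau>b overlap_valid_middle]) (use xn nm True in auto)
  thus ?thesis using True by simp
next
  case False
  hence n1: "n = 1" "\<tau> \<noteq> []" using xn by auto
  have "\<not> overlap_valid (\<sigma>@[m+1,n-1]@\<tau>) (\<sigma>b@[x]@\<tau>b)"
  proof
    assume v: "overlap_valid (\<sigma>@[m+1,n-1]@\<tau>) (\<sigma>b@[x]@\<tau>b)"
    have "Suc (length \<sigma>) < length (\<sigma>b@[x]@\<tau>b)" using len_\<sigma>b len_\<tau>b n1(2) by simp
    hence "(\<sigma>b@[x]@\<tau>b)!Suc (length \<sigma>) \<le> (\<sigma>@[m+1,n-1]@\<tau>)!Suc (length \<sigma>)"
      using v unfolding overlap_valid_def by fastforce
    moreover have "(\<sigma>b@[x]@\<tau>b)!Suc (length \<sigma>) = hd \<tau>b"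
      using len_\<sigma>b n1(2) len_\<tau>b by (cases \<tau>b) (auto simp: nth_append)
    ultimately show False using hd_\<tau>b n1 by (simp add: nth_append)
  qed
  thus ?thesis using False unfolding skew_schur_def by simp
qed

end

theorem corollary2p8:
  fixes \<sigma> \<tau> \<sigma>b \<tau>b :: "nat list" and m n x :: nat
  assumes comp_\<sigma>: "\<forall>a\<in>set \<sigma>. 1 \<le> a"
    and comp_\<tau>: "\<forall>a\<in>set \<tau>. 1 \<le> a"
    and len_\<sigma>b: "length \<sigma>b = length \<sigma>"
    and len_\<tau>b: "length \<tau>b = length \<tau>"
    and last_\<sigma>b: "\<sigma> \<noteq> [] \<longrightarrow> last \<sigma>b = 1"
    and hd_\<tau>b: "\<tau> \<noteq> [] \<longrightarrow> hd \<tau>b = 1"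
    and ov_\<sigma>: "\<forall>i. i + 1 < length \<sigma> \<longrightarrow> \<sigma>b ! i \<le> min (\<sigma> ! i) (\<sigma> ! (i + 1))"
    and ov_\<tau>: "\<forall>i. 0 < i \<and> i < length \<tau> \<longrightarrow> \<tau>b ! i \<le> min (\<tau> ! i) (\<tau> ! (i - 1))"
    and "x < n" and "n \<le> m"
  shows "skew_schur (\<sigma> @ [m, n] @ \<tau>) (\<sigma>b @ [x] @ \<tau>b) c
           - skew_schur (\<sigma> @ [m + 1, n - 1] @ \<tau>) (\<sigma>b @ [x] @ \<tau>b) c
         = skew_schur (\<sigma> @ [m, n] @ \<tau>) (\<sigma>b @ [n] @ \<tau>b) c
           + (if \<tau> = [] then 0
              else skew_schur (\<sigma> @ [m + 1, n - 1 + hd \<tau>] @ tl \<tau>) (\<sigma>b @ [n] @ tl \<tau>b) c)"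
proof -
  interpret standing_hypothesis \<sigma> \<tau> \<sigma>b \<tau>b m n x c
    by unfold_locales (use assms in auto)
  show ?thesis
    unfolding skew_schur_x skew_schur_shift skew_schur_n
    using card_Tx card_stuck skew_schur_merge by auto
qed

end
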